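(* The maps $\partial_H$ and $[\ ,\ ]$ are trivial on homology $H_*(\mathcal G,\partial_E)$.
   Context: $Q$ is a mated species based on sets and $\mathcal G$ is its graph complex: spanned over $\mathbb Q$ by oriented $Q$-graphs (vertices carry $Q$-structures on incident half-edges), modulo orientation reversal giving a sign and isomorphism. $\partial_E$ sums over contractions of non-loop edges; $\partial_H$ sums over contractions of quasi-edges (pairs of distinct half-edges at distinct vertices) that are not edges; they satisfy $\partial_E^2=\partial_H^2=0$ and $\partial_E\partial_H=-\partial_H\partial_E$, so $\partial_H$ induces a map on $H_*(\mathcal G,\partial_E)$. $\mu$ is the product given by disjoint union of graphs, with $\partial_E\mu=\mu\partial_E$. The bracket $[\ ,\ ]:\mathcal G\otimes\mathcal G\to\mathcal G$ is $[\ ,\ ]=\partial_H\mu-\mu\partial_H$; it satisfies $\partial_E[\ ,\ ]=-[\ ,\ ]\partial_E$ and so induces a map $H_*(\mathcal G,\partial_E)\otimes H_*(\mathcal G,\partial_E)\to H_*(\mathcal G,\partial_E)$. *)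

theory Defs
  imports Complex_Main "HOL-Combinatorics.Permutations" "HOL-Library.Function_Algebras"
begin

text \<open>A species Q is given by, for every finite label set S, a set Qs S of
Q-structures on S, together with transport of structures along injections.
Finite sets of labels are taken inside nat; every finite set is in bijection
with such a set, so nothing is lost.  A mating combines a structure on S with
a chosen point a and a structure on a disjoint T with chosen point b into a
structure on (S - a) union (T - b); it is what is used to contract an edge or
quasi-edge joining the half-edges a and b.\<close>

record 'q species =
  Qs   :: "nat set \<Rightarrow> 'q set"
  tr   :: "(nat \<Rightarrow> nat) \<Rightarrow> 'q \<Rightarrow> 'q"
  mate :: "nat \<Rightarrow> 'q \<Rightarrow> nat \<Rightarrow> 'q \<Rightarrow> 'q"

definition species :: "'q species \<Rightarrow> bool" where
  "species Q \<longleftrightarrow>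
     (\<forall>S f x. finite S \<longrightarrow> inj_on f S \<longrightarrow> x \<in> Qs Q S \<longrightarrow> tr Q f x \<in> Qs Q (f ` S)) \<and>
     (\<forall>S x. x \<in> Qs Q S \<longrightarrow> tr Q id x = x) \<and>
     (\<forall>S f g x. finite S \<longrightarrow> inj_on f S \<longrightarrow> inj_on g (f ` S) \<longrightarrow> x \<in> Qs Q S \<longrightarrow>
        tr Q (g \<circ> f) x = tr Q g (tr Q f x)) \<and>
     (\<forall>S f g x. x \<in> Qs Q S \<longrightarrow> (\<forall>s\<in>S. f s = g s) \<longrightarrow> tr Q f x = tr Q g x)"

definition mated_species :: "'q species \<Rightarrow> bool" where
  "mated_species Q \<longleftrightarrow> species Q \<and>
     \<comment> \<open>typing of the mating\<close>
     (\<forall>S T a b x y. finite S \<longrightarrow> finite T \<longrightarrow> S \<inter> T = {} \<longrightarrow> a \<in> S \<longrightarrow> b \<in> T \<longrightarrow>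
        x \<in> Qs Q S \<longrightarrow> y \<in> Qs Q T \<longrightarrow> mate Q a x b y \<in> Qs Q ((S - {a}) \<union> (T - {b}))) \<and>
     \<comment> \<open>equivariance\<close>
     (\<forall>S T a b x y f. finite S \<longrightarrow> finite T \<longrightarrow> S \<inter> T = {} \<longrightarrow> a \<in> S \<longrightarrow> b \<in> T \<longrightarrow>
        x \<in> Qs Q S \<longrightarrow> y \<in> Qs Q T \<longrightarrow> inj_on f (S \<union> T) \<longrightarrow>
        tr Q f (mate Q a x b y) = mate Q (f a) (tr Q f x) (f b) (tr Q f y)) \<and>
     \<comment> \<open>commutativity\<close>
     (\<forall>S T a b x y. finite S \<longrightarrow> finite T \<longrightarrow> S \<inter> T = {} \<longrightarrow> a \<in> S \<longrightarrow> b \<in> T \<longrightarrow>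
        x \<in> Qs Q S \<longrightarrow> y \<in> Qs Q T \<longrightarrow> mate Q a x b y = mate Q b y a x) \<and>
     \<comment> \<open>associativity\<close>
     (\<forall>S T U a b c d x y z. finite S \<longrightarrow> finite T \<longrightarrow> finite U \<longrightarrow>
        S \<inter> T = {} \<longrightarrow> S \<inter> U = {} \<longrightarrow> T \<inter> U = {} \<longrightarrow>
        a \<in> S \<longrightarrow> b \<in> T \<longrightarrow> c \<in> T \<longrightarrow> c \<noteq> b \<longrightarrow> d \<in> U \<longrightarrow>
        x \<in> Qs Q S \<longrightarrow> y \<in> Qs Q T \<longrightarrow> z \<in> Qs Q U \<longrightarrow>
        mate Q c (mate Q a x b y) d z = mate Q a x b (mate Q c y d z))"

text \<open>An oriented Q-graph is represented with vertex set {0..<nv} and half-edge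
set {0..<nh}; vx maps a half-edge to its vertex, pr is the fixed-point-free
involution pairing half-edges into edges, and st v is the Q-structure at v on
the set of half-edges at v.  The orientation is the one of
det(R^V) tensor det(R^H) (equivalently det(R^V) tensor the edge directions)
given by the numberings of vertices and half-edges.\<close>

record 'q qgraph =
  nv :: nat
  nh :: nat
  vx :: "nat \<Rightarrow> nat"
  pr :: "nat \<Rightarrow> nat"
  st :: "nat \<Rightarrow> 'q"

definition hes :: "'q qgraph \<Rightarrow> nat \<Rightarrow> nat set" where
  "hes G v = {h. h < nh G \<and> vx G h = v}"

definition wf :: "'q species \<Rightarrow> 'q qgraph \<Rightarrow> bool" where
  "wf Q G \<longleftrightarrow>
     (\<forall>h < nh G. vx G h < nv G \<and> pr G h < nh G \<and> pr G h \<noteq> h \<and> pr G (pr G h) = h) \<and>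
     (\<forall>h. nh G \<le> h \<longrightarrow> vx G h = 0 \<and> pr G h = 0) \<and>
     (\<forall>v < nv G. st G v \<in> Qs Q (hes G v)) \<and>
     (\<forall>v. nv G \<le> v \<longrightarrow> st G v = undefined)"

definition relabel :: "'q species \<Rightarrow> (nat \<Rightarrow> nat) \<Rightarrow> (nat \<Rightarrow> nat) \<Rightarrow> 'q qgraph \<Rightarrow> 'q qgraph" where
  "relabel Q \<sigma> \<tau> G =
     \<lparr> nv = nv G, nh = nh G,
       vx = (\<lambda>h. if h < nh G then \<sigma> (vx G (inv \<tau> h)) else 0),
       pr = (\<lambda>h. if h < nh G then \<tau> (pr G (inv \<tau> h)) else 0),
       st = (\<lambda>v. if v < nv G then tr Q \<tau> (st G (inv \<sigma> v)) else undefined) \<rparr>"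

type_synonym 'q chain = "'q qgraph \<Rightarrow> rat"

definition gchains :: "'q species \<Rightarrow> 'q chain set" where
  "gchains Q = {c. finite {G. c G \<noteq> 0} \<and> (\<forall>G. c G \<noteq> 0 \<longrightarrow> wf Q G)}"

definition single :: "'q qgraph \<Rightarrow> 'q chain" where
  "single G = (\<lambda>K. if K = G then 1 else 0)"

definition smult :: "rat \<Rightarrow> 'q chain \<Rightarrow> 'q chain" where
  "smult r c = (\<lambda>K. r * c K)"

definition lin :: "('q qgraph \<Rightarrow> 'q chain) \<Rightarrow> 'q chain \<Rightarrow> 'q chain" where
  "lin f c = (\<Sum>G\<in>{G. c G \<noteq> 0}. smult (c G) (f G))"

definition lin2 :: "('q qgraph \<Rightarrow> 'q qgraph \<Rightarrow> 'q chain) \<Rightarrow> 'q chain \<Rightarrow> 'q chain \<Rightarrow> 'q chain" where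
  "lin2 f c d = (\<Sum>G1\<in>{G. c G \<noteq> 0}. \<Sum>G2\<in>{G. d G \<noteq> 0}. smult (c G1 * d G2) (f G1 G2))"

text \<open>The subspace of relations: a graph equals sign(sigma)*sign(tau) times its
relabelling (this encodes both isomorphism and orientation reversal).  The graph
complex is chains modulo this subspace.\<close>

inductive_set relsp :: "'q species \<Rightarrow> 'q chain set" for Q where
  zero: "(\<lambda>K. 0) \<in> relsp Q"
| add: "x \<in> relsp Q \<Longrightarrow> y \<in> relsp Q \<Longrightarrow> x + y \<in> relsp Q"
| scale: "x \<in> relsp Q \<Longrightarrow> smult r x \<in> relsp Q"
| gen: "wf Q G \<Longrightarrow> \<sigma> permutes {..<nv G} \<Longrightarrow> \<tau> permutes {..<nh G} \<Longrightarrow>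
        single G - smult (of_int (sign \<sigma> * sign \<tau>)) (single (relabel Q \<sigma> \<tau> G)) \<in> relsp Q"

text \<open>skip2 x y enumerates the naturals other than x,y in increasing order;
rank2 x y is its inverse.\<close>

definition skip2 :: "nat \<Rightarrow> nat \<Rightarrow> nat \<Rightarrow> nat" where
  "skip2 x y k = (if k < min x y then k else if k + 1 < max x y then k + 1 else k + 2)"

definition rank2 :: "nat \<Rightarrow> nat \<Rightarrow> nat \<Rightarrow> nat" where
  "rank2 x y k = k - card {u \<in> {x, y}. u < k}"

text \<open>Sign of the permutation of {0..<n} listing i, j first and then the rest
in increasing order.\<close>

definition fsign :: "nat \<Rightarrow> nat \<Rightarrow> rat" where
  "fsign i j = (if i < j then (-1) ^ (i + j - 1) else (-1) ^ (i + j))"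

text \<open>Contracting the pair of half-edges a, b at distinct vertices i, j: the
orientation is first rewritten as (v_i v_j ...) tensor (a b ...), then v_i, v_j
are merged into the new vertex 0 (Q-structure given by the mating along a, b)
and a, b are deleted.  The former partners of a and b are paired with each
other (for an edge, pr a = b, this does nothing; for a quasi-edge this joins
the two remaining half-edges into a new edge).\<close>

definition contr_graph :: "'q species \<Rightarrow> 'q qgraph \<Rightarrow> nat \<Rightarrow> nat \<Rightarrow> 'q qgraph" where
  "contr_graph Q G a b =
     (let i = vx G a; j = vx G b;
          vnew = (\<lambda>v. Suc (rank2 i j v));
          hnew = rank2 a b;
          rp = (\<lambda>h. if pr G h = a then pr G b else if pr G h = b then pr G a else pr G h);
          nv' = nv G - 1; nh' = nh G - 2
      in \<lparr> nv = nv',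
           nh = nh',
           vx = (\<lambda>h. if h < nh' then (let v = vx G (skip2 a b h) in
                                        if v = i \<or> v = j then 0 else vnew v) else 0),
           pr = (\<lambda>h. if h < nh' then hnew (rp (skip2 a b h)) else 0),
           st = (\<lambda>w. if w = 0 then tr Q hnew (mate Q a (st G i) b (st G j))
                     else if w < nv' then tr Q hnew (st G (skip2 i j (w - 1)))
                     else undefined) \<rparr>)"

definition contr :: "'q species \<Rightarrow> 'q qgraph \<Rightarrow> nat \<Rightarrow> nat \<Rightarrow> 'q chain" where
  "contr Q G a b = smult (fsign (vx G a) (vx G b) * fsign a b) (single (contr_graph Q G a b))"

definition dE_graph :: "'q species \<Rightarrow> 'q qgraph \<Rightarrow> 'q chain" where
  "dE_graph Q G = (\<Sum>(a, b)\<in>{(a, b). a < b \<and> b < nh G \<and> pr G a = b \<and> vx G a \<noteq> vx G b}.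
                      contr Q G a b)"

definition dH_graph :: "'q species \<Rightarrow> 'q qgraph \<Rightarrow> 'q chain" where
  "dH_graph Q G = (\<Sum>(a, b)\<in>{(a, b). a < b \<and> b < nh G \<and> pr G a \<noteq> b \<and> vx G a \<noteq> vx G b}.
                      contr Q G a b)"

definition dE :: "'q species \<Rightarrow> 'q chain \<Rightarrow> 'q chain" where
  "dE Q = lin (dE_graph Q)"

definition dH :: "'q species \<Rightarrow> 'q chain \<Rightarrow> 'q chain" where
  "dH Q = lin (dH_graph Q)"

definition mu_graph :: "'q species \<Rightarrow> 'q qgraph \<Rightarrow> 'q qgraph \<Rightarrow> 'q qgraph" where
  "mu_graph Q G1 G2 =
     \<lparr> nv = nv G1 + nv G2,
       nh = nh G1 + nh G2,
       vx = (\<lambda>h. if h < nh G1 then vx G1 h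
                 else if h < nh G1 + nh G2 then nv G1 + vx G2 (h - nh G1) else 0),
       pr = (\<lambda>h. if h < nh G1 then pr G1 h
                 else if h < nh G1 + nh G2 then nh G1 + pr G2 (h - nh G1) else 0),
       st = (\<lambda>v. if v < nv G1 then st G1 v
                 else if v < nv G1 + nv G2 then tr Q (\<lambda>h. h + nh G1) (st G2 (v - nv G1))
                 else undefined) \<rparr>"

definition mu :: "'q species \<Rightarrow> 'q chain \<Rightarrow> 'q chain \<Rightarrow> 'q chain" where
  "mu Q = lin2 (\<lambda>G1 G2. single (mu_graph Q G1 G2))"

text \<open>[ , ] = partial_H mu - mu partial_H, where partial_H acts on the tensor
square with the Koszul sign: partial_H (x tensor y) = partial_H x tensor y +
(-1)^|x| x tensor partial_H y, the degree parity of a graph being its number of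
vertices (the parity for which partial_E mu = mu partial_E holds).\<close>

definition bracket_graph :: "'q species \<Rightarrow> 'q qgraph \<Rightarrow> 'q qgraph \<Rightarrow> 'q chain" where
  "bracket_graph Q G1 G2 =
     dH Q (single (mu_graph Q G1 G2))
     - mu Q (dH Q (single G1)) (single G2)
     - smult ((-1) ^ nv G1) (mu Q (single G1) (dH Q (single G2)))"

definition bracket :: "'q species \<Rightarrow> 'q chain \<Rightarrow> 'q chain \<Rightarrow> 'q chain" where
  "bracket Q = lin2 (bracket_graph Q)"



end

theory Submission
  imports Defs
begin

text \<open>Let \<open>S\<close> send a graph to half the sum, over all pairs \<open>{a, b}\<close> of half-edges that do not
  form an edge, of the graph in which \<open>a\<close> is joined to \<open>b\<close> and \<open>pr a\<close> to \<open>pr b\<close>. Already on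
  graphs, \<open>dE S - S dE = dH\<close>: the contractions of the two new edges of a rewired graph are the
  \<open>dH\<close>-terms of \<open>{a, b}\<close> and \<open>{pr a, pr b}\<close>, while contracting an old edge commutes with
  rewiring. Since \<open>S\<close> respects the relations, \<open>dH\<close> sends \<open>dE\<close>-cycles to boundaries. Moreover \<open>dE\<close>
  is a graded derivation of the disjoint union product up to relations, and the product preserves
  relations in each factor. Substituting \<open>dH = dE S - S dE\<close> into the three terms of the bracket
  then shows that the bracket of two cycles \<open>x\<close>, \<open>y\<close> is, up to relations, the boundary of
  \<open>S (x y) - (S x) y - x (S y)\<close>.\<close>

declare plus_fun_apply[simp del] minus_apply[simp del] uminus_apply[simp del] zero_fun_apply[simp del]

lemmas fun_apply_simps = plus_fun_apply minus_apply uminus_apply zero_fun_apply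

definition finsupp :: "'q chain \<Rightarrow> bool" where
  "finsupp c \<longleftrightarrow> finite {G. c G \<noteq> 0}"

lemma smult_apply: "smult r c G = r * c G"
  by (simp add: smult_def)

lemma smult_zero_left [simp]: "smult 0 c = 0"
  by (auto simp: smult_def fun_eq_iff fun_apply_simps)

lemma smult_zero_right [simp]: "smult r 0 = 0"
  by (auto simp: smult_def fun_eq_iff fun_apply_simps)

lemma smult_one [simp]: "smult 1 c = c"
  by (auto simp: smult_def fun_eq_iff)

lemma smult_smult [simp]: "smult a (smult b c) = smult (a * b) c"
  by (auto simp: smult_def fun_eq_iff)

lemma smult_add_right: "smult a (c + d) = smult a c + smult a d"
  by (auto simp: smult_def fun_eq_iff algebra_simps fun_apply_simps)

lemma smult_diff_right: "smult a (c - d) = smult a c - smult a d"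
  by (auto simp: smult_def fun_eq_iff algebra_simps fun_apply_simps)

lemma smult_add_left: "smult (a + b) c = smult a c + smult b c"
  by (auto simp: smult_def fun_eq_iff algebra_simps fun_apply_simps)

lemma smult_sum_right: "smult r (\<Sum>i\<in>A. f i) = (\<Sum>i\<in>A. smult r (f i))"
  by (induction A rule: infinite_finite_induct) (simp_all add: smult_add_right)

lemma smult_minus_one: "smult (-1) c = - c"
  by (auto simp: fun_eq_iff fun_apply_simps smult_def)

lemma finsupp_add [simp]: "finsupp c \<Longrightarrow> finsupp d \<Longrightarrow> finsupp (c + d)"
  unfolding finsupp_def
  by (rule finite_subset[of _ "{G. c G \<noteq> 0} \<union> {G. d G \<noteq> 0}"]) (auto simp: fun_apply_simps)

lemma finsupp_uminus [simp]: "finsupp (- c) = finsupp c"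
  unfolding finsupp_def by (simp add: fun_apply_simps)

lemma finsupp_diff [simp]: "finsupp c \<Longrightarrow> finsupp d \<Longrightarrow> finsupp (c - d)"
  unfolding finsupp_def
  by (rule finite_subset[of _ "{G. c G \<noteq> 0} \<union> {G. d G \<noteq> 0}"]) (auto simp: fun_apply_simps)

lemma finsupp_smult [simp]: "finsupp c \<Longrightarrow> finsupp (smult r c)"
  unfolding finsupp_def by (rule finite_subset[of _ "{G. c G \<noteq> 0}"]) (auto simp: smult_def)

lemma finsupp_single [simp]: "finsupp (single G)"
  unfolding finsupp_def by (rule finite_subset[of _ "{G}"]) (auto simp: single_def)

lemma finsupp_zero [simp]: "finsupp 0" "finsupp (\<lambda>K. 0)"
  unfolding finsupp_def by (auto simp: fun_apply_simps)

lemma finsupp_sum: "(\<And>i. i \<in> A \<Longrightarrow> finsupp (f i)) \<Longrightarrow> finsupp (\<Sum>i\<in>A. f i)"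
  by (induction A rule: infinite_finite_induct) auto

lemma finsupp_lin: "finsupp c \<Longrightarrow> (\<And>G. c G \<noteq> 0 \<Longrightarrow> finsupp (f G)) \<Longrightarrow> finsupp (lin f c)"
  unfolding lin_def by (rule finsupp_sum) auto

lemma lin_eq_sum_over:
  "finite A \<Longrightarrow> {G. c G \<noteq> 0} \<subseteq> A \<Longrightarrow> lin f c = (\<Sum>G\<in>A. smult (c G) (f G))"
  unfolding lin_def by (rule sum.mono_neutral_left) auto

lemma lin_add: "finsupp c \<Longrightarrow> finsupp d \<Longrightarrow> lin f (c + d) = lin f c + lin f d"
proof -
  assume "finsupp c" "finsupp d"
  then have fin: "finite ({G. c G \<noteq> 0} \<union> {G. d G \<noteq> 0})"
    by (simp add: finsupp_def)
  have "lin f (c + d) = (\<Sum>G\<in>{G. c G \<noteq> 0} \<union> {G. d G \<noteq> 0}. smult ((c + d) G) (f G))"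
    by (rule lin_eq_sum_over[OF fin]) (auto simp: fun_apply_simps)
  also have "\<dots> = lin f c + lin f d"
    using lin_eq_sum_over[OF fin, of c f] lin_eq_sum_over[OF fin, of d f]
    by (simp add: fun_apply_simps smult_add_left sum.distrib)
  finally show ?thesis .
qed

lemma lin_smult: "finsupp c \<Longrightarrow> lin f (smult r c) = smult r (lin f c)"
proof -
  assume "finsupp c"
  then have fin: "finite {G. c G \<noteq> 0}"
    by (simp add: finsupp_def)
  have "lin f (smult r c) = (\<Sum>G\<in>{G. c G \<noteq> 0}. smult (smult r c G) (f G))"
    by (rule lin_eq_sum_over[OF fin]) (auto simp: smult_def)
  also have "\<dots> = smult r (lin f c)"
    using lin_eq_sum_over[OF fin, of c f] by (simp add: smult_sum_right smult_apply)
  finally show ?thesis .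
qed

lemma lin_zero [simp]: "lin f 0 = 0" "lin f (\<lambda>K. 0) = 0"
  by (simp_all add: lin_def fun_apply_simps)

lemma lin_single [simp]: "lin f (single G) = f G"
  using lin_eq_sum_over[of "{G}" "single G" f] by (auto simp: single_def)

lemma lin_uminus: "finsupp c \<Longrightarrow> lin f (- c) = - lin f c"
  using lin_smult[of c f "-1"] by (simp add: smult_minus_one)

lemma lin_diff: "finsupp c \<Longrightarrow> finsupp d \<Longrightarrow> lin f (c - d) = lin f c - lin f d"
  using lin_add[of c "- d" f] lin_uminus[of d f] by simp

lemma lin_sum: "(\<And>i. i \<in> A \<Longrightarrow> finsupp (g i)) \<Longrightarrow> lin f (\<Sum>i\<in>A. g i) = (\<Sum>i\<in>A. lin f (g i))"
  by (induction A rule: infinite_finite_induct) (simp_all add: lin_add finsupp_sum)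

lemma lin_cong: "(\<And>G. c G \<noteq> 0 \<Longrightarrow> f G = g G) \<Longrightarrow> lin f c = lin g c"
  unfolding lin_def by (rule sum.cong) auto

lemma lin_fun_diff: "lin (\<lambda>G. f G - g G) c = lin f c - lin g c"
  unfolding lin_def by (simp add: smult_diff_right sum_subtractf)

lemma lin_fun_smult: "lin (\<lambda>G. smult r (f G)) c = smult r (lin f c)"
  unfolding lin_def by (simp add: smult_sum_right mult.commute)

lemma lin_lin:
  "finsupp c \<Longrightarrow> (\<And>G. c G \<noteq> 0 \<Longrightarrow> finsupp (g G)) \<Longrightarrow> lin f (lin g c) = lin (\<lambda>G. lin f (g G)) c"
  unfolding lin_def[of g] by (subst lin_sum) (auto simp: lin_smult lin_def[of _ c])

lemma lin2_eq_lin_lin: "lin2 B c d = lin (\<lambda>G1. lin (B G1) d) c"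
  unfolding lin2_def lin_def by (simp add: smult_sum_right)

lemma lin_lin_swap:
  "lin (\<lambda>G. lin (\<lambda>G'. B G G') d) c = lin (\<lambda>G'. lin (\<lambda>G. B G G') c) d"
  unfolding lin_def by (simp add: smult_sum_right sum.swap[of _ "{G. c G \<noteq> 0}"] mult.commute)

lemma lin_sum_smult_single:
  "lin f (\<Sum>i\<in>A. smult (r i) (single (k i))) = (\<Sum>i\<in>A. smult (r i) (f (k i)))"
  by (subst lin_sum) (auto simp: lin_smult)

lemma relsp_zero: "0 \<in> relsp Q"
  using relsp.zero[of Q] by (simp add: zero_fun_def)

lemma relsp_finsupp: "x \<in> relsp Q \<Longrightarrow> finsupp x"
  by (induction rule: relsp.induct) auto

lemma relsp_uminus: "x \<in> relsp Q \<Longrightarrow> - x \<in> relsp Q"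
  using relsp.scale[of x Q "-1"] by (simp add: smult_minus_one)

lemma relsp_diff: "x \<in> relsp Q \<Longrightarrow> y \<in> relsp Q \<Longrightarrow> x - y \<in> relsp Q"
  using relsp.add[OF _ relsp_uminus] by (metis diff_conv_add_uminus)

lemma relsp_sum: "(\<And>i. i \<in> A \<Longrightarrow> f i \<in> relsp Q) \<Longrightarrow> (\<Sum>i\<in>A. f i) \<in> relsp Q"
  by (induction A rule: infinite_finite_induct) (auto intro: relsp_zero relsp.add)

lemma relsp_lin: "finsupp c \<Longrightarrow> (\<And>G. c G \<noteq> 0 \<Longrightarrow> f G \<in> relsp Q) \<Longrightarrow> lin f c \<in> relsp Q"
  unfolding lin_def by (rule relsp_sum) (auto intro: relsp.scale)

lemma relsp_relabel_single:
  assumes "wf Q G" "\<sigma> permutes {..<nv G}" "\<tau> permutes {..<nh G}"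
  shows "single (relabel Q \<sigma> \<tau> G) - smult (of_int (sign \<sigma> * sign \<tau>)) (single G) \<in> relsp Q"
proof -
  let ?e = "of_int (sign \<sigma> * sign \<tau>) :: rat"
  have "sign \<sigma> * sign \<tau> * (sign \<sigma> * sign \<tau>) = (1::int)"
    by (simp add: algebra_simps)
  then have e2: "?e * ?e = 1"
    by (metis of_int_1 of_int_mult)
  have "smult (- ?e) (single G - smult ?e (single (relabel Q \<sigma> \<tau> G))) \<in> relsp Q"
    by (rule relsp.scale[OF relsp.gen[OF assms]])
  also have "smult (- ?e) (single G - smult ?e (single (relabel Q \<sigma> \<tau> G)))
     = single (relabel Q \<sigma> \<tau> G) - smult ?e (single G)"
  proof -
    have "- ?e * (a - ?e * b) = b - ?e * a" for a b :: rat
      using e2 by (simp add: algebra_simps)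
    then show ?thesis by (simp add: fun_eq_iff fun_apply_simps smult_apply)
  qed
  finally show ?thesis .
qed

lemma lin_relsp_invariant:
  assumes "r \<in> relsp Q"
    and "\<And>G \<sigma> \<tau>. wf Q G \<Longrightarrow> \<sigma> permutes {..<nv G} \<Longrightarrow> \<tau> permutes {..<nh G} \<Longrightarrow>
       f G - smult (of_int (sign \<sigma> * sign \<tau>)) (f (relabel Q \<sigma> \<tau> G)) \<in> relsp Q"
  shows "lin f r \<in> relsp Q"
  using assms(1)
proof (induction rule: relsp.induct)
  case zero
  then show ?case by (simp add: relsp_zero)
next
  case (add x y)
  then show ?case by (simp add: lin_add relsp_finsupp relsp.add)
next
  case (scale x r)
  then show ?case by (simp add: lin_smult relsp_finsupp relsp.scale)
next
  case (gen G \<sigma> \<tau>)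
  then show ?case using assms(2)[OF gen] by (simp add: lin_diff lin_smult)
qed

lemma gchains_iff: "c \<in> gchains Q \<longleftrightarrow> finsupp c \<and> (\<forall>G. c G \<noteq> 0 \<longrightarrow> wf Q G)"
  by (simp add: gchains_def finsupp_def)

lemma gchains_finsupp: "c \<in> gchains Q \<Longrightarrow> finsupp c"
  by (simp add: gchains_iff)

lemma gchains_wf: "c \<in> gchains Q \<Longrightarrow> c G \<noteq> 0 \<Longrightarrow> wf Q G"
  by (simp add: gchains_iff)

lemma gchains_add: "c \<in> gchains Q \<Longrightarrow> d \<in> gchains Q \<Longrightarrow> c + d \<in> gchains Q"
  unfolding gchains_iff by (auto simp: fun_apply_simps) (metis add.left_neutral)

lemma gchains_diff: "c \<in> gchains Q \<Longrightarrow> d \<in> gchains Q \<Longrightarrow> c - d \<in> gchains Q"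
  unfolding gchains_iff by (auto simp: fun_apply_simps) (metis diff_zero diff_0)

lemma gchains_smult: "c \<in> gchains Q \<Longrightarrow> smult r c \<in> gchains Q"
  unfolding gchains_iff by (auto simp: smult_apply)

lemma gchains_zero: "0 \<in> gchains Q"
  unfolding gchains_iff by (auto simp: fun_apply_simps)

lemma gchains_single: "wf Q G \<Longrightarrow> single G \<in> gchains Q"
  unfolding gchains_iff using finsupp_single[of G] by (auto simp: single_def)

lemma gchains_sum: "(\<And>i. i \<in> A \<Longrightarrow> f i \<in> gchains Q) \<Longrightarrow> (\<Sum>i\<in>A. f i) \<in> gchains Q"
  by (induction A rule: infinite_finite_induct) (auto intro: gchains_zero gchains_add)

lemma gchains_lin: "finsupp c \<Longrightarrow> (\<And>G. c G \<noteq> 0 \<Longrightarrow> f G \<in> gchains Q) \<Longrightarrow> lin f c \<in> gchains Q"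
  unfolding lin_def by (rule gchains_sum) (auto intro: gchains_smult)

lemma rank2_eq: "x \<noteq> y \<Longrightarrow> rank2 x y k = k - ((if x < k then 1 else 0) + (if y < k then 1 else 0))"
proof -
  assume "x \<noteq> y"
  moreover have "{u \<in> {x, y}. u < k} = (if x < k then {x} else {}) \<union> (if y < k then {y} else {})"
    by auto
  ultimately show ?thesis
    unfolding rank2_def by (auto split: if_splits)
qed

context
  fixes x y :: nat
  assumes xy: "x \<noteq> y"
begin

lemma skip2_rank2: "k \<noteq> x \<Longrightarrow> k \<noteq> y \<Longrightarrow> skip2 x y (rank2 x y k) = k"
  using xy by (simp add: rank2_eq skip2_def split: if_splits) arith?

lemma rank2_skip2: "rank2 x y (skip2 x y k) = k"
  using xy by (simp add: rank2_eq skip2_def split: if_splits) arith?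

lemma skip2_neq_left: "skip2 x y k \<noteq> x"
  using xy by (simp add: skip2_def split: if_splits) arith?

lemma skip2_neq_right: "skip2 x y k \<noteq> y"
  using xy by (simp add: skip2_def split: if_splits) arith?

lemma rank2_strict_mono:
  "k < k' \<Longrightarrow> k \<noteq> x \<Longrightarrow> k \<noteq> y \<Longrightarrow> k' \<noteq> x \<Longrightarrow> k' \<noteq> y \<Longrightarrow> rank2 x y k < rank2 x y k'"
  using xy by (simp add: rank2_eq split: if_splits) arith?

lemma rank2_inj:
  "k \<noteq> x \<Longrightarrow> k \<noteq> y \<Longrightarrow> k' \<noteq> x \<Longrightarrow> k' \<noteq> y \<Longrightarrow> rank2 x y k = rank2 x y k' \<Longrightarrow> k = k'"
  by (metis skip2_rank2)

lemma inj_on_rank2: "S \<inter> {x, y} = {} \<Longrightarrow> inj_on (rank2 x y) S"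
  unfolding inj_on_def using rank2_inj by blast

lemma rank2_less: "k < n \<Longrightarrow> x < n \<Longrightarrow> y < n \<Longrightarrow> k \<noteq> x \<Longrightarrow> k \<noteq> y \<Longrightarrow> rank2 x y k < n - 2"
  using xy by (simp add: rank2_eq split: if_splits) arith?

lemma skip2_less: "k < n - 2 \<Longrightarrow> x < n \<Longrightarrow> y < n \<Longrightarrow> skip2 x y k < n"
  using xy by (simp add: skip2_def split: if_splits) arith?

lemma skip2_strict_mono: "k < k' \<Longrightarrow> skip2 x y k < skip2 x y k'"
  using xy by (simp add: skip2_def split: if_splits) arith?

lemma rank2_shift: "rank2 (n + x) (n + y) (n + k) = n + rank2 x y k"
  using xy by (simp add: rank2_eq split: if_splits) arith?

lemma rank2_shift_below: "k < n \<Longrightarrow> rank2 (n + x) (n + y) k = k"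
  using xy by (simp add: rank2_eq split: if_splits)

lemma skip2_shift: "skip2 (n + x) (n + y) (n + k) = n + skip2 x y k"
  using xy by (simp add: skip2_def split: if_splits) arith?

lemma skip2_shift_below: "k < n \<Longrightarrow> skip2 (n + x) (n + y) k = k"
  using xy by (simp add: skip2_def split: if_splits)

lemma rank2_above: "x < k \<Longrightarrow> y < k \<Longrightarrow> rank2 x y k = k - 2"
  using xy by (simp add: rank2_eq split: if_splits)

lemma skip2_above: "x \<le> k + 1 \<Longrightarrow> y \<le> k + 1 \<Longrightarrow> skip2 x y k = k + 2"
  using xy by (simp add: skip2_def split: if_splits) arith?

end

lemma fsign_shift: "fsign (n + i) (n + j) = fsign i j"
proof (cases "i < j")
  case True
  then have "n + i + (n + j) - 1 = (i + j - 1) + 2 * n"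
    by arith
  then have "(-1::rat) ^ (n + i + (n + j) - 1) = (-1) ^ (i + j - 1)"
    by (simp only:) (simp add: power_add power_mult)
  then show ?thesis
    using True by (simp add: fsign_def)
next
  case False
  have "n + i + (n + j) = (i + j) + 2 * n"
    by arith
  then show ?thesis
    using False by (simp add: fsign_def power_add power_mult)
qed

locale mated =
  fixes Q :: "'q species"
  assumes mated_species: "mated_species Q"
begin

lemma species_Q: "species Q"
  using mated_species by (simp add: mated_species_def)

lemma tr_in_Qs: "finite S \<Longrightarrow> inj_on f S \<Longrightarrow> x \<in> Qs Q S \<Longrightarrow> tr Q f x \<in> Qs Q (f ` S)"
  using species_Q unfolding species_def by (elim conjE) blast

lemma tr_id: "x \<in> Qs Q S \<Longrightarrow> tr Q id x = x"
  using species_Q unfolding species_def by (elim conjE) blast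

lemma tr_comp:
  assumes "finite S" "inj_on f S" "inj_on g (f ` S)" "x \<in> Qs Q S"
  shows "tr Q (g \<circ> f) x = tr Q g (tr Q f x)"
proof -
  have "\<forall>S f g x. finite S \<longrightarrow> inj_on f S \<longrightarrow> inj_on g (f ` S) \<longrightarrow> x \<in> Qs Q S \<longrightarrow>
      tr Q (g \<circ> f) x = tr Q g (tr Q f x)"
    using species_Q unfolding species_def by (elim conjE)
  then show ?thesis
    using assms by blast
qed

lemma tr_cong:
  assumes "x \<in> Qs Q S" "\<And>s. s \<in> S \<Longrightarrow> f s = g s"
  shows "tr Q f x = tr Q g x"
proof -
  have "\<forall>S f g x. x \<in> Qs Q S \<longrightarrow> (\<forall>s\<in>S. f s = g s) \<longrightarrow> tr Q f x = tr Q g x"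
    using species_Q unfolding species_def by (elim conjE)
  then show ?thesis
    using assms by blast
qed

lemma tr_eq_self: "x \<in> Qs Q S \<Longrightarrow> (\<And>s. s \<in> S \<Longrightarrow> f s = s) \<Longrightarrow> tr Q f x = x"
  using tr_cong[of x S f id] tr_id by simp

lemma tr_tr_eq:
  "finite S \<Longrightarrow> inj_on f S \<Longrightarrow> inj_on g (f ` S) \<Longrightarrow> x \<in> Qs Q S \<Longrightarrow>
   (\<And>s. s \<in> S \<Longrightarrow> g (f s) = h s) \<Longrightarrow> tr Q g (tr Q f x) = tr Q h x"
  using tr_comp[of S f g x] tr_cong[of x S "g \<circ> f" h] by simp

lemma mate_in_Qs:
  "finite S \<Longrightarrow> finite T \<Longrightarrow> S \<inter> T = {} \<Longrightarrow> a \<in> S \<Longrightarrow> b \<in> T \<Longrightarrow>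
   x \<in> Qs Q S \<Longrightarrow> y \<in> Qs Q T \<Longrightarrow> mate Q a x b y \<in> Qs Q ((S - {a}) \<union> (T - {b}))"
  using mated_species unfolding mated_species_def by (elim conjE) blast

lemma tr_mate:
  assumes "finite S" "finite T" "S \<inter> T = {}" "a \<in> S" "b \<in> T" "x \<in> Qs Q S" "y \<in> Qs Q T"
    and "inj_on f (S \<union> T)"
  shows "tr Q f (mate Q a x b y) = mate Q (f a) (tr Q f x) (f b) (tr Q f y)"
proof -
  have "\<forall>S T a b x y f. finite S \<longrightarrow> finite T \<longrightarrow> S \<inter> T = {} \<longrightarrow> a \<in> S \<longrightarrow> b \<in> T \<longrightarrow>
      x \<in> Qs Q S \<longrightarrow> y \<in> Qs Q T \<longrightarrow> inj_on f (S \<union> T) \<longrightarrow>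
      tr Q f (mate Q a x b y) = mate Q (f a) (tr Q f x) (f b) (tr Q f y)"
    using mated_species unfolding mated_species_def by (elim conjE)
  then show ?thesis
    using assms by blast
qed

end

lemma finite_hes: "finite (hes G v)"
  unfolding hes_def by (rule finite_subset[of _ "{..<nh G}"]) auto

context
  fixes Q :: "'q species" and G :: "'q qgraph"
  assumes W: "wf Q G"
begin

lemma wf_vx_less: "h < nh G \<Longrightarrow> vx G h < nv G"
  using W by (simp add: wf_def)

lemma wf_pr_less: "h < nh G \<Longrightarrow> pr G h < nh G"
  using W by (simp add: wf_def)

lemma wf_pr_neq: "h < nh G \<Longrightarrow> pr G h \<noteq> h"
  using W by (simp add: wf_def)

lemma wf_pr_pr: "h < nh G \<Longrightarrow> pr G (pr G h) = h"
  using W by (simp add: wf_def)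

lemma wf_pr_outside: "nh G \<le> h \<Longrightarrow> pr G h = 0"
  using W by (simp add: wf_def)

lemma wf_st: "v < nv G \<Longrightarrow> st G v \<in> Qs Q (hes G v)"
  using W by (simp add: wf_def)

end

lemma qgraph_eqI:
  "nv A = nv B \<Longrightarrow> nh A = nh B \<Longrightarrow> vx A = vx B \<Longrightarrow> pr A = pr B \<Longrightarrow> st A = st B \<Longrightarrow> A = (B :: 'q qgraph)"
  by (cases A, cases B) simp

lemma relabel_simps:
  "nv (relabel Q \<sigma> \<tau> G) = nv G"
  "nh (relabel Q \<sigma> \<tau> G) = nh G"
  "vx (relabel Q \<sigma> \<tau> G) h = (if h < nh G then \<sigma> (vx G (inv \<tau> h)) else 0)"
  "pr (relabel Q \<sigma> \<tau> G) h = (if h < nh G then \<tau> (pr G (inv \<tau> h)) else 0)"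
  "st (relabel Q \<sigma> \<tau> G) v = (if v < nv G then tr Q \<tau> (st G (inv \<sigma> v)) else undefined)"
  by (simp_all add: relabel_def)

lemma permutes_lessThan_facts:
  assumes "\<tau> permutes {..<(n::nat)}"
  shows "x < n \<Longrightarrow> \<tau> x < n" "x < n \<Longrightarrow> inv \<tau> x < n" "inv \<tau> (\<tau> x) = x" "\<tau> (inv \<tau> x) = x"
    "\<tau> x = \<tau> y \<longleftrightarrow> x = y" "inv \<tau> x = inv \<tau> y \<longleftrightarrow> x = y"
  using assms permutes_in_image[OF assms] permutes_in_image[OF permutes_inv[OF assms]]
    permutes_inverses[OF assms]
  by (auto dest: permutes_inj[THEN injD] permutes_inj[OF permutes_inv[OF assms], THEN injD])

section \<open>Rewiring a quasi-edge into an edge\<close>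

definition rewire :: "'q qgraph \<Rightarrow> nat \<Rightarrow> nat \<Rightarrow> 'q qgraph" where
  "rewire G a b = G\<lparr>pr := (\<lambda>h. if h = a then b else if h = b then a else if h = pr G a then pr G b
                          else if h = pr G b then pr G a else pr G h)\<rparr>"

lemma rewire_simps [simp]:
  "nv (rewire G a b) = nv G" "nh (rewire G a b) = nh G" "vx (rewire G a b) = vx G" "st (rewire G a b) = st G"
  by (simp_all add: rewire_def)

lemma pr_rewire:
  "pr (rewire G a b) h = (if h = a then b else if h = b then a else if h = pr G a then pr G b
                          else if h = pr G b then pr G a else pr G h)"
  by (simp add: rewire_def)

context
  fixes Q :: "'q species" and G :: "'q qgraph" and a b
  assumes W: "wf Q G" and ab: "a < nh G" "b < nh G" "a \<noteq> b" "pr G a \<noteq> b"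
begin

lemma quasi_pair_facts:
  "pr G a < nh G" "pr G b < nh G" "pr G a \<noteq> a" "pr G b \<noteq> b" "pr G b \<noteq> a"
  "pr G a \<noteq> pr G b" "pr G (pr G a) = a" "pr G (pr G b) = b"
  using W ab wf_pr_less wf_pr_neq wf_pr_pr by metis+

lemma wf_rewire: "wf Q (rewire G a b)"
proof -
  have hes: "hes (rewire G a b) = hes G"
    by (rule ext) (simp add: hes_def)
  let ?p = "pr (rewire G a b)"
  have inv: "?p (?p h) = h" if "h < nh G" for h
  proof -
    consider "h = a" | "h = b" | "h = pr G a" | "h = pr G b"
      | "h \<noteq> a" "h \<noteq> b" "h \<noteq> pr G a" "h \<noteq> pr G b"
      by blast
    then show ?thesis
    proof cases
      case 5
      have "pr G h \<noteq> a" "pr G h \<noteq> b" "pr G h \<noteq> pr G a" "pr G h \<noteq> pr G b"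
        using 5 that ab quasi_pair_facts wf_pr_pr[OF W] by metis+
      then show ?thesis
        using 5 wf_pr_pr[OF W that] unfolding pr_rewire by simp
    qed (use ab quasi_pair_facts in \<open>simp_all add: pr_rewire\<close>)
  qed
  have "?p h < nh G \<and> ?p h \<noteq> h" if "h < nh G" for h
    using that ab quasi_pair_facts wf_pr_less[OF W] wf_pr_neq[OF W] unfolding pr_rewire by auto
  moreover have "?p h = 0" if "nh G \<le> h" for h
    using that ab quasi_pair_facts wf_pr_outside[OF W] unfolding pr_rewire by auto
  ultimately show ?thesis
    using W inv unfolding wf_def hes rewire_simps by blast
qed

lemma rewire_commute: "rewire G b a = rewire G a b"
  using ab quasi_pair_facts by (auto simp: rewire_def fun_eq_iff)

lemma rewire_partners: "rewire G (pr G a) (pr G b) = rewire G a b"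
  using ab quasi_pair_facts by (auto simp: rewire_def fun_eq_iff)

end

lemma relabel_rewire:
  assumes W: "wf Q G" and t: "\<tau> permutes {..<nh G}"
    and ab: "a < nh G" "b < nh G" "a \<noteq> b" "pr G a \<noteq> b"
  shows "relabel Q \<sigma> \<tau> (rewire G a b) = rewire (relabel Q \<sigma> \<tau> G) (\<tau> a) (\<tau> b)"
proof (rule qgraph_eqI)
  note q = quasi_pair_facts[OF W ab]
  note P = permutes_lessThan_facts[OF t]
  show "pr (relabel Q \<sigma> \<tau> (rewire G a b)) = pr (rewire (relabel Q \<sigma> \<tau> G) (\<tau> a) (\<tau> b))"
  proof
    fix h
    show "pr (relabel Q \<sigma> \<tau> (rewire G a b)) h = pr (rewire (relabel Q \<sigma> \<tau> G) (\<tau> a) (\<tau> b)) h"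
    proof (cases "h < nh G")
      case True
      have "inv \<tau> h = x \<longleftrightarrow> h = \<tau> x" for x
        using P by metis
      then show ?thesis
        using True q ab P unfolding relabel_simps pr_rewire rewire_simps by (auto simp: P)
    next
      case False
      then have "h \<noteq> \<tau> a" "h \<noteq> \<tau> b" "h \<noteq> \<tau> (pr G a)" "h \<noteq> \<tau> (pr G b)"
        using q ab P by auto
      then show ?thesis
        using False ab q unfolding relabel_simps pr_rewire rewire_simps by (auto simp: P)
    qed
  qed
qed (simp_all add: relabel_def fun_eq_iff)

definition rejoin_pr :: "'q qgraph \<Rightarrow> nat \<Rightarrow> nat \<Rightarrow> nat \<Rightarrow> nat" where
  "rejoin_pr G a b h = (if pr G h = a then pr G b else if pr G h = b then pr G a else pr G h)"

lemma contr_graph_simps: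
  "nv (contr_graph Q G a b) = nv G - 1"
  "nh (contr_graph Q G a b) = nh G - 2"
  "vx (contr_graph Q G a b) h = (if h < nh G - 2 then
        (if vx G (skip2 a b h) = vx G a \<or> vx G (skip2 a b h) = vx G b then 0
        else Suc (rank2 (vx G a) (vx G b) (vx G (skip2 a b h)))) else 0)"
  "pr (contr_graph Q G a b) h = (if h < nh G - 2 then rank2 a b (rejoin_pr G a b (skip2 a b h)) else 0)"
  "st (contr_graph Q G a b) w = (if w = 0 then tr Q (rank2 a b) (mate Q a (st G (vx G a)) b (st G (vx G b)))
                     else if w < nv G - 1 then tr Q (rank2 a b) (st G (skip2 (vx G a) (vx G b) (w - 1)))
                     else undefined)"
  by (simp_all add: contr_graph_def Let_def rejoin_pr_def)

lemma pr_contr_graph_edge: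
  assumes W: "wf Q G" and cd: "c < nh G" "d < nh G" "c \<noteq> d" "pr G c = d" and h: "h < nh G - 2"
  shows "pr (contr_graph Q G c d) h = rank2 c d (pr G (skip2 c d h))"
proof -
  have pd: "pr G d = c" using cd wf_pr_pr[OF W] by metis
  let ?k = "skip2 c d h"
  have k: "?k \<noteq> c" "?k \<noteq> d" "?k < nh G"
    using skip2_neq_left[OF cd(3)] skip2_neq_right[OF cd(3)] skip2_less[OF cd(3) h cd(1,2)] by auto
  have "rejoin_pr G c d ?k = pr G ?k" using k cd pd wf_pr_pr[OF W] unfolding rejoin_pr_def by metis
  then show ?thesis using h by (simp add: contr_graph_simps)
qed

definition nonloop_edges :: "'q qgraph \<Rightarrow> (nat \<times> nat) set" where
  "nonloop_edges G = {e. fst e < snd e \<and> snd e < nh G \<and> pr G (fst e) = snd e \<and> vx G (fst e) \<noteq> vx G (snd e)}"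

lemma finite_nonloop_edges: "finite (nonloop_edges G)"
  by (rule finite_subset[of _ "{..<nh G} \<times> {..<nh G}"]) (auto simp: nonloop_edges_def)

lemma nonloop_edgesD: "(a, b) \<in> nonloop_edges G \<Longrightarrow> a < b \<and> b < nh G \<and> pr G a = b \<and> vx G a \<noteq> vx G b"
  by (simp add: nonloop_edges_def)

lemma nonloop_edge_facts:
  assumes W: "wf Q G" and e: "(a, b) \<in> nonloop_edges G"
  shows "a < b" "a < nh G" "b < nh G" "a \<noteq> b" "pr G a = b" "pr G b = a"
    "vx G a < nv G" "vx G b < nv G" "vx G a \<noteq> vx G b"
  using nonloop_edgesD[OF e] wf_pr_pr[OF W] wf_vx_less[OF W] by (metis order.strict_trans)+

lemma dE_graph_eq_sum: "dE_graph Q G = (\<Sum>e\<in>nonloop_edges G. contr Q G (fst e) (snd e))"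
  unfolding dE_graph_def nonloop_edges_def by (simp add: split_def)

lemma finsupp_contr: "finsupp (contr Q G a b)" by (simp add: contr_def)
lemma finsupp_dE_graph: "finsupp (dE_graph Q G)"
  unfolding dE_graph_eq_sum by (rule finsupp_sum) (simp add: finsupp_contr)
lemma finsupp_dE: "finsupp c \<Longrightarrow> finsupp (dE Q c)"
  unfolding dE_def by (rule finsupp_lin) (auto simp: finsupp_dE_graph)

section \<open>The homotopy\<close>

definition quasi_pairs :: "'q qgraph \<Rightarrow> (nat \<times> nat) set" where
  "quasi_pairs G = {q. fst q < snd q \<and> snd q < nh G \<and> pr G (fst q) \<noteq> snd q}"

lemma finite_quasi_pairs: "finite (quasi_pairs G)"
  by (rule finite_subset[of _ "{..<nh G} \<times> {..<nh G}"]) (auto simp: quasi_pairs_def)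

lemma quasi_pairsD:
  "q \<in> quasi_pairs G \<Longrightarrow> fst q < nh G \<and> snd q < nh G \<and> fst q \<noteq> snd q \<and> pr G (fst q) \<noteq> snd q"
  by (auto simp: quasi_pairs_def)

definition sorted_pair :: "nat \<Rightarrow> nat \<Rightarrow> nat \<times> nat" where
  "sorted_pair x y = (min x y, max x y)"

definition partner_pair :: "'q qgraph \<Rightarrow> nat \<times> nat \<Rightarrow> nat \<times> nat" where
  "partner_pair G q = sorted_pair (pr G (fst q)) (pr G (snd q))"

lemma partner_pair_quasi_pairs:
  assumes W: "wf Q G" and q: "q \<in> quasi_pairs G"
  shows "partner_pair G q \<in> quasi_pairs G" "partner_pair G (partner_pair G q) = q"
proof -
  obtain a b where q_eq: "q = (a, b)"
    by force
  then have "a < b" "a < nh G" "b < nh G" "a \<noteq> b" "pr G a \<noteq> b"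
    using q by (auto simp: quasi_pairs_def)
  note ab = this quasi_pair_facts[OF W this(2-5)]
  show "partner_pair G q \<in> quasi_pairs G" "partner_pair G (partner_pair G q) = q"
    using ab q_eq by (auto simp: partner_pair_def sorted_pair_def quasi_pairs_def min_def max_def)
qed

lemma bij_betw_partner_pair: "wf Q G \<Longrightarrow> bij_betw (partner_pair G) (quasi_pairs G) (quasi_pairs G)"
  by (rule bij_betw_byWitness[where f' = "partner_pair G"]) (auto simp: partner_pair_quasi_pairs)

definition dH_term :: "'q species \<Rightarrow> 'q qgraph \<Rightarrow> nat \<times> nat \<Rightarrow> 'q chain" where
  "dH_term Q G q = (if vx G (fst q) \<noteq> vx G (snd q) then contr Q G (fst q) (snd q) else 0)"

lemma dH_graph_eq_sum: "dH_graph Q G = (\<Sum>q\<in>quasi_pairs G. dH_term Q G q)"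
proof -
  have "dH_graph Q G = (\<Sum>q\<in>{q \<in> quasi_pairs G. vx G (fst q) \<noteq> vx G (snd q)}. contr Q G (fst q) (snd q))"
    unfolding dH_graph_def quasi_pairs_def by (simp add: split_def conj_assoc)
  also have "\<dots> = (\<Sum>q\<in>quasi_pairs G. dH_term Q G q)"
    unfolding dH_term_def by (rule sum.inter_filter[OF finite_quasi_pairs])
  finally show ?thesis .
qed

lemma finsupp_dH_graph: "finsupp (dH_graph Q G)"
  unfolding dH_graph_eq_sum dH_term_def by (rule finsupp_sum) (simp add: finsupp_contr)

text \<open>Every rewired graph arises from exactly two quasi-pairs, \<open>{a, b}\<close> and \<open>{pr a, pr b}\<close>,
  hence the factor \<open>1/2\<close>. Pairs at a single vertex are included so that \<open>partner_pair G\<close> is a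
  bijection of \<open>quasi_pairs G\<close>; their \<open>dH_term\<close> vanishes.\<close>

definition htpy_graph :: "'q qgraph \<Rightarrow> 'q chain" where
  "htpy_graph G = smult (1/2) (\<Sum>q\<in>quasi_pairs G. single (rewire G (fst q) (snd q)))"

lemma finsupp_htpy_graph: "finsupp (htpy_graph G)"
  unfolding htpy_graph_def by (rule finsupp_smult, rule finsupp_sum) simp

lemma htpy_graph_gchains: "wf Q G \<Longrightarrow> htpy_graph G \<in> gchains Q"
  unfolding htpy_graph_def
  by (rule gchains_smult, rule gchains_sum, rule gchains_single, rule wf_rewire) (auto dest: quasi_pairsD)

lemma bij_betw_quasi_pairs_relabel:
  assumes W: "wf Q G" and t: "\<tau> permutes {..<nh G}"
  shows "bij_betw (\<lambda>q. sorted_pair (\<tau> (fst q)) (\<tau> (snd q))) (quasi_pairs G) (quasi_pairs (relabel Q \<sigma> \<tau> G))"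
proof -
  note P = permutes_lessThan_facts[OF t]
  let ?R = "relabel Q \<sigma> \<tau> G"
  let ?f = "\<lambda>q. sorted_pair (\<tau> (fst q)) (\<tau> (snd q))"
    and ?g = "\<lambda>q. sorted_pair (inv \<tau> (fst q)) (inv \<tau> (snd q))"
  have img_f: "?f q \<in> quasi_pairs ?R" if "q \<in> quasi_pairs G" for q
  proof -
    obtain a b where q: "q = (a, b)"
      by force
    have ab: "a < nh G" "b < nh G" "a \<noteq> b" "pr G a \<noteq> b"
      using that q by (auto simp: quasi_pairs_def)
    have "pr ?R (\<tau> a) \<noteq> \<tau> b" "pr ?R (\<tau> b) \<noteq> \<tau> a"
      using ab quasi_pair_facts[OF W ab] by (auto simp: relabel_simps P)
    then show ?thesis
      using ab P q
      by (auto simp: quasi_pairs_def sorted_pair_def min_def max_def relabel_simps(2) less_le)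
  qed
  have img_g: "?g q \<in> quasi_pairs G" if "q \<in> quasi_pairs ?R" for q
  proof -
    obtain a b where q: "q = (a, b)"
      by force
    have ab: "a < nh G" "b < nh G" "a \<noteq> b" "pr G (inv \<tau> a) \<noteq> inv \<tau> b"
      using that q P by (auto simp: quasi_pairs_def relabel_simps)
    moreover have "pr G (inv \<tau> b) \<noteq> inv \<tau> a"
      using ab W P by (metis wf_pr_pr)
    ultimately show ?thesis
      using P q by (auto simp: quasi_pairs_def sorted_pair_def min_def max_def less_le)
  qed
  show ?thesis
  proof (rule bij_betw_byWitness[where f' = ?g])
    show "?f ` quasi_pairs G \<subseteq> quasi_pairs ?R" "?g ` quasi_pairs ?R \<subseteq> quasi_pairs G"
      using img_f img_g by blast+
  qed (auto simp: sorted_pair_def quasi_pairs_def P min_def max_def relabel_simps)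
qed

lemma htpy_graph_relabel_relsp:
  assumes W: "wf Q G" and s: "\<sigma> permutes {..<nv G}" and t: "\<tau> permutes {..<nh G}"
  shows "htpy_graph G - smult (of_int (sign \<sigma> * sign \<tau>)) (htpy_graph (relabel Q \<sigma> \<tau> G)) \<in> relsp Q"
proof -
  let ?R = "relabel Q \<sigma> \<tau> G" and ?e = "of_int (sign \<sigma> * sign \<tau>) :: rat"
  let ?sw = "\<lambda>q. rewire G (fst q) (snd q)" and ?f = "\<lambda>q. sorted_pair (\<tau> (fst q)) (\<tau> (snd q))"
  have relabel_sw: "rewire ?R (fst (?f q)) (snd (?f q)) = relabel Q \<sigma> \<tau> (?sw q)" if "q \<in> quasi_pairs G" for q
  proof -
    obtain a b where q: "q = (a, b)"
      by force
    have ab: "a < nh G" "b < nh G" "a \<noteq> b" "pr G a \<noteq> b"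
      using that q by (auto simp: quasi_pairs_def)
    have ba: "b < nh G" "a < nh G" "b \<noteq> a" "pr G b \<noteq> a"
      using quasi_pair_facts[OF W ab] ab by auto
    show ?thesis
      using q relabel_rewire[OF W t ab] relabel_rewire[OF W t ba] rewire_commute[OF W ab]
      by (auto simp: sorted_pair_def min_def max_def)
  qed
  have "htpy_graph ?R = smult (1/2) (\<Sum>q\<in>quasi_pairs G. single (relabel Q \<sigma> \<tau> (?sw q)))"
    unfolding htpy_graph_def sum.reindex_bij_betw[OF bij_betw_quasi_pairs_relabel[OF W t], symmetric]
    using relabel_sw by simp
  then have "htpy_graph G - smult ?e (htpy_graph ?R)
      = smult (1/2) (\<Sum>q\<in>quasi_pairs G. single (?sw q) - smult ?e (single (relabel Q \<sigma> \<tau> (?sw q))))"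
    unfolding htpy_graph_def
    by (simp add: sum_subtractf smult_diff_right smult_sum_right[symmetric] mult.commute)
  also have "\<dots> \<in> relsp Q"
  proof (rule relsp.scale, rule relsp_sum)
    fix q
    assume "q \<in> quasi_pairs G"
    then have "wf Q (?sw q)"
      using wf_rewire[OF W] by (auto simp: quasi_pairs_def)
    then show "single (?sw q) - smult ?e (single (relabel Q \<sigma> \<tau> (?sw q))) \<in> relsp Q"
      by (rule relsp.gen) (use s t in simp_all)
  qed
  finally show ?thesis .
qed

lemma contr_graph_rewire_self:
  assumes W: "wf Q G" and ab: "a < nh G" "b < nh G" "a \<noteq> b" "pr G a \<noteq> b"
  shows "contr_graph Q (rewire G a b) a b = contr_graph Q G a b"
proof (rule qgraph_eqI)
  note q = quasi_pair_facts[OF W ab]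
  have r: "rejoin_pr (rewire G a b) a b k = rejoin_pr G a b k" if "k \<noteq> a" "k \<noteq> b" "k < nh G" for k
  proof -
    have "pr G k = a \<longleftrightarrow> k = pr G a" "pr G k = b \<longleftrightarrow> k = pr G b"
      using that q ab wf_pr_pr[OF W] by metis+
    then show ?thesis using that q ab unfolding rejoin_pr_def pr_rewire by auto
  qed
  show "pr (contr_graph Q (rewire G a b) a b) = pr (contr_graph Q G a b)"
  proof
    fix h
    show "pr (contr_graph Q (rewire G a b) a b) h = pr (contr_graph Q G a b) h"
      unfolding contr_graph_simps rewire_simps
      using r[OF skip2_neq_left[OF ab(3)] skip2_neq_right[OF ab(3)] skip2_less[OF ab(3)]] ab
      by auto
  qed
qed (simp_all add: contr_graph_simps fun_eq_iff)

lemma contr_rewire_self: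
  assumes "wf Q G" "a < nh G" "b < nh G" "a \<noteq> b" "pr G a \<noteq> b"
  shows "contr Q (rewire G a b) a b = contr Q G a b"
  using contr_graph_rewire_self[OF assms] by (simp add: contr_def)

lemma contr_graph_rewire_disjoint:
  assumes W: "wf Q G" and ab: "a < nh G" "b < nh G" "a \<noteq> b" "pr G a \<noteq> b"
    and cd: "c < nh G" "d < nh G" "c \<noteq> d" "pr G c = d" and disj: "a \<noteq> c" "a \<noteq> d" "b \<noteq> c" "b \<noteq> d"
  shows "contr_graph Q (rewire G a b) c d = rewire (contr_graph Q G c d) (rank2 c d a) (rank2 c d b)"
proof (rule qgraph_eqI)
  note q = quasi_pair_facts[OF W ab]
  let ?K = "contr_graph Q G c d" and ?r = "rank2 c d" and ?s = "skip2 c d"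
  have nq: "pr G a \<noteq> c" "pr G a \<noteq> d" "pr G b \<noteq> c" "pr G b \<noteq> d"
    using disj cd q wf_pr_pr[OF W] by metis+
  have edge: "pr (rewire G a b) c = d"
    using disj nq cd by (auto simp: pr_rewire)
  have ra: "?r a < nh G - 2" "?r b < nh G - 2" "?r (pr G a) < nh G - 2" "?r (pr G b) < nh G - 2"
    using rank2_less[OF cd(3)] ab cd disj nq q by auto
  have prKa: "pr ?K (?r a) = ?r (pr G a)" "pr ?K (?r b) = ?r (pr G b)"
    using pr_contr_graph_edge[OF W cd] ra skip2_rank2[OF cd(3)] disj by auto
  show "pr (contr_graph Q (rewire G a b) c d) = pr (rewire ?K (?r a) (?r b))"
  proof
    fix h
    show "pr (contr_graph Q (rewire G a b) c d) h = pr (rewire ?K (?r a) (?r b)) h"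
    proof (cases "h < nh G - 2")
      case True
      have iff: "h = ?r x \<longleftrightarrow> ?s h = x" if "x \<noteq> c" "x \<noteq> d" for x
        using that skip2_rank2[OF cd(3)] rank2_skip2[OF cd(3)] by metis
      have "h = ?r a \<longleftrightarrow> ?s h = a" "h = ?r b \<longleftrightarrow> ?s h = b"
        "h = ?r (pr G a) \<longleftrightarrow> ?s h = pr G a" "h = ?r (pr G b) \<longleftrightarrow> ?s h = pr G b"
        using iff disj nq by simp_all
      then show ?thesis
        using pr_contr_graph_edge[OF wf_rewire[OF W ab], of c d h] pr_contr_graph_edge[OF W cd True]
          cd edge True
        unfolding pr_rewire[of ?K] prKa by (simp add: pr_rewire)
    next
      case False
      then have "h \<noteq> ?r a" "h \<noteq> ?r b" "h \<noteq> ?r (pr G a)" "h \<noteq> ?r (pr G b)"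
        using ra by auto
      then show ?thesis
        using False unfolding pr_rewire prKa by (simp add: contr_graph_simps)
    qed
  qed
qed (simp_all add: contr_graph_simps fun_eq_iff)

definition disjoint_pairs :: "nat \<times> nat \<Rightarrow> nat \<times> nat \<Rightarrow> bool" where
  "disjoint_pairs f q \<longleftrightarrow> fst q \<noteq> fst f \<and> fst q \<noteq> snd f \<and> snd q \<noteq> fst f \<and> snd q \<noteq> snd f"

context
  fixes Q :: "'q species" and G :: "'q qgraph" and a b :: nat
  assumes W: "wf Q G" and q: "(a, b) \<in> quasi_pairs G"
begin

lemma quasi_pair_bounds: "a < b" "a < nh G" "b < nh G" "a \<noteq> b" "pr G a \<noteq> b"
  using q by (auto simp: quasi_pairs_def)

lemma pr_rewire_quasi_pair:
  "pr (rewire G a b) a = b" "pr (rewire G a b) b = a"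
  "pr (rewire G a b) (pr G a) = pr G b" "pr (rewire G a b) (pr G b) = pr G a"
  using quasi_pair_bounds quasi_pair_facts[OF W quasi_pair_bounds(2-5)] by (auto simp: pr_rewire)

lemma partner_pair_eq:
  "partner_pair G (a, b) = (if pr G a < pr G b then (pr G a, pr G b) else (pr G b, pr G a))"
  using quasi_pair_facts[OF W quasi_pair_bounds(2-5)]
  by (auto simp: partner_pair_def sorted_pair_def min_def max_def)

lemma rewire_partner_pair:
  "rewire G (fst (partner_pair G (a, b))) (snd (partner_pair G (a, b))) = rewire G a b"
proof -
  note ab = quasi_pair_bounds quasi_pair_facts[OF W quasi_pair_bounds(2-5)]
  have "rewire G (pr G b) (pr G a) = rewire G (pr G a) (pr G b)"
    by (rule rewire_commute[OF W]) (use ab in auto)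
  then show ?thesis
    using partner_pair_eq rewire_partners[OF W ab(2-5)] by auto
qed

lemma nonloop_edges_rewire_subset:
  "nonloop_edges (rewire G a b) \<subseteq> (if vx G a \<noteq> vx G b then {(a, b)} else {})
    \<union> (if vx G (pr G a) \<noteq> vx G (pr G b) then {partner_pair G (a, b)} else {})
    \<union> {f \<in> nonloop_edges G. disjoint_pairs f (a, b)}"
proof
  fix e
  assume "e \<in> nonloop_edges (rewire G a b)"
  moreover obtain c d where e: "e = (c, d)"
    by force
  ultimately have E: "c < d" "d < nh G" "pr (rewire G a b) c = d" "vx G c \<noteq> vx G d"
    by (auto simp: nonloop_edges_def)
  note f = quasi_pair_bounds quasi_pair_facts[OF W quasi_pair_bounds(2-5)]
  consider "c = a" | "c = b" | "c = pr G a" | "c = pr G b"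
    | (other) "c \<noteq> a" "c \<noteq> b" "c \<noteq> pr G a" "c \<noteq> pr G b"
    by blast
  then show "e \<in> (if vx G a \<noteq> vx G b then {(a, b)} else {})
    \<union> (if vx G (pr G a) \<noteq> vx G (pr G b) then {partner_pair G (a, b)} else {})
    \<union> {f \<in> nonloop_edges G. disjoint_pairs f (a, b)}"
  proof cases
    case other
    then have "d = pr G c"
      using E by (simp add: pr_rewire)
    moreover have "d \<noteq> a" "d \<noteq> b"
      using other f E wf_pr_pr[OF W]
      unfolding \<open>d = pr G c\<close> by (metis order.strict_trans)+
    ultimately show ?thesis
      using E e other by (auto simp: nonloop_edges_def disjoint_pairs_def)
  qed (use E e f pr_rewire_quasi_pair partner_pair_eq in auto)
qed

lemma nonloop_edges_subset_rewire:
  "(if vx G a \<noteq> vx G b then {(a, b)} else {})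
    \<union> (if vx G (pr G a) \<noteq> vx G (pr G b) then {partner_pair G (a, b)} else {})
    \<union> {f \<in> nonloop_edges G. disjoint_pairs f (a, b)} \<subseteq> nonloop_edges (rewire G a b)"
proof
  fix e
  assume e: "e \<in> (if vx G a \<noteq> vx G b then {(a, b)} else {})
    \<union> (if vx G (pr G a) \<noteq> vx G (pr G b) then {partner_pair G (a, b)} else {})
    \<union> {f \<in> nonloop_edges G. disjoint_pairs f (a, b)}"
  note f = quasi_pair_bounds quasi_pair_facts[OF W quasi_pair_bounds(2-5)]
  consider "e = (a, b)" "vx G a \<noteq> vx G b" | "e = partner_pair G (a, b)" "vx G (pr G a) \<noteq> vx G (pr G b)"
    | (old) "e \<in> nonloop_edges G" "disjoint_pairs e (a, b)"
    using e by (auto split: if_splits)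
  then show "e \<in> nonloop_edges (rewire G a b)"
  proof cases
    case old
    obtain c d where cd: "e = (c, d)"
      by force
    have E: "c < d" "d < nh G" "pr G c = d" "vx G c \<noteq> vx G d"
      using old cd by (auto simp: nonloop_edges_def)
    have "a \<noteq> c" "a \<noteq> d" "b \<noteq> c" "b \<noteq> d"
      using old cd by (auto simp: disjoint_pairs_def)
    moreover have "c \<noteq> pr G a" "c \<noteq> pr G b"
      using calculation E f wf_pr_pr[OF W] by (metis order.strict_trans)+
    ultimately have "pr (rewire G a b) c = d"
      using E by (simp add: pr_rewire)
    then show ?thesis
      using E cd by (auto simp: nonloop_edges_def)
  qed (use f pr_rewire_quasi_pair partner_pair_eq in \<open>auto simp: nonloop_edges_def\<close>)
qed

end

lemma nonloop_edges_rewire: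
  assumes "wf Q G" and "(a, b) \<in> quasi_pairs G"
  shows "nonloop_edges (rewire G a b) = (if vx G a \<noteq> vx G b then {(a, b)} else {})
    \<union> (if vx G (pr G a) \<noteq> vx G (pr G b) then {partner_pair G (a, b)} else {})
    \<union> {f \<in> nonloop_edges G. disjoint_pairs f (a, b)}"
  using nonloop_edges_rewire_subset[OF assms] nonloop_edges_subset_rewire[OF assms]
  by (rule subset_antisym)

lemma dE_graph_rewire:
  assumes W: "wf Q G" and q: "(a, b) \<in> quasi_pairs G"
  shows "dE_graph Q (rewire G a b) = dH_term Q G (a, b) + dH_term Q G (partner_pair G (a, b)) +
     (\<Sum>f\<in>{f \<in> nonloop_edges G. disjoint_pairs f (a, b)}. contr Q (rewire G a b) (fst f) (snd f))"
proof -
  note ab = quasi_pair_bounds[OF W q]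
  note f = quasi_pair_facts[OF W ab(2-5)]
  let ?A = "if vx G a \<noteq> vx G b then {(a, b)} else {}"
  let ?B = "if vx G (pr G a) \<noteq> vx G (pr G b) then {partner_pair G (a, b)} else {}"
  let ?C = "{f \<in> nonloop_edges G. disjoint_pairs f (a, b)}"
  let ?g = "\<lambda>e. contr Q (rewire G a b) (fst e) (snd e)"
  have d1: "?A \<inter> ?B = {}"
    using f by (auto simp: partner_pair_def sorted_pair_def min_def max_def)
  have d2: "(?A \<union> ?B) \<inter> ?C = {}"
    using f
    by (auto simp: partner_pair_def sorted_pair_def min_def max_def disjoint_pairs_def nonloop_edges_def)
  have fC: "finite ?C"
    by (rule finite_subset[OF _ finite_nonloop_edges[of G]]) auto
  have "dE_graph Q (rewire G a b) = sum ?g (?A \<union> ?B) + sum ?g ?C"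
    unfolding dE_graph_eq_sum nonloop_edges_rewire[OF W q]
    by (rule sum.union_disjoint) (use d2 fC in auto)
  also have "sum ?g (?A \<union> ?B) = sum ?g ?A + sum ?g ?B"
    by (rule sum.union_disjoint) (use d1 in auto)
  also have "sum ?g ?A = dH_term Q G (a, b)"
    using contr_rewire_self[OF W ab(2-5)] by (simp add: dH_term_def)
  also have "sum ?g ?B = dH_term Q G (partner_pair G (a, b))"
  proof -
    obtain c d where cd: "partner_pair G (a, b) = (c, d)"
      by force
    then have "(c, d) \<in> quasi_pairs G"
      using partner_pair_quasi_pairs[OF W q] by simp
    then have "contr Q (rewire G a b) c d = contr Q G c d"
      using contr_rewire_self[OF W, of c d] rewire_partner_pair[OF W q] cd by (auto simp: quasi_pairs_def)
    moreover have "vx G c \<noteq> vx G d \<longleftrightarrow> vx G (pr G a) \<noteq> vx G (pr G b)"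
      using cd partner_pair_eq[OF W q] by (auto split: if_splits)
    ultimately show ?thesis
      using cd by (simp add: dH_term_def)
  qed
  finally show ?thesis .
qed

definition quasi_pairs_avoiding :: "'q qgraph \<Rightarrow> nat \<times> nat \<Rightarrow> (nat \<times> nat) set" where
  "quasi_pairs_avoiding G e = {q \<in> quasi_pairs G. disjoint_pairs e q}"

lemma bij_betw_quasi_pairs_contr_graph:
  assumes W: "wf Q G" and e: "(c, d) \<in> nonloop_edges G"
  shows "bij_betw (\<lambda>q. (rank2 c d (fst q), rank2 c d (snd q)))
    (quasi_pairs_avoiding G (c, d)) (quasi_pairs (contr_graph Q G c d))"
proof -
  let ?K = "contr_graph Q G c d"
  let ?f = "\<lambda>q. (rank2 c d (fst q), rank2 c d (snd q))" and ?g = "\<lambda>q. (skip2 c d (fst q), skip2 c d (snd q))"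
  note cd = nonloop_edge_facts[OF W e]
  note RS = skip2_rank2[OF cd(4)] rank2_skip2[OF cd(4)] skip2_neq_left[OF cd(4)] skip2_neq_right[OF cd(4)]
  note pr_K = pr_contr_graph_edge[OF W cd(2-5)]
  have img_f: "?f q \<in> quasi_pairs ?K" if "q \<in> quasi_pairs_avoiding G (c, d)" for q
  proof -
    obtain a b where q: "q = (a, b)"
      by force
    have ab: "a < b" "b < nh G" "pr G a \<noteq> b" "a \<noteq> c" "a \<noteq> d" "b \<noteq> c" "b \<noteq> d"
      using that q by (auto simp: quasi_pairs_avoiding_def quasi_pairs_def disjoint_pairs_def)
    have pa: "pr G a \<noteq> c" "pr G a \<noteq> d"
      using ab cd wf_pr_pr[OF W] by (metis order.strict_trans)+
    have lt: "rank2 c d a < rank2 c d b" "rank2 c d b < nh G - 2"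
      using rank2_strict_mono[OF cd(4) ab(1,4-7)] rank2_less[OF cd(4) ab(2) cd(2,3) ab(6,7)] .
    have "pr ?K (rank2 c d a) = rank2 c d (pr G a)"
      using pr_K[of "rank2 c d a"] lt RS ab by simp
    moreover have "rank2 c d (pr G a) \<noteq> rank2 c d b"
      using rank2_inj[OF cd(4) pa ab(6,7)] ab(3) by blast
    ultimately show ?thesis
      using lt q by (simp add: quasi_pairs_def contr_graph_simps)
  qed
  have img_g: "?g q \<in> quasi_pairs_avoiding G (c, d)" if "q \<in> quasi_pairs ?K" for q
  proof -
    obtain a b where q: "q = (a, b)"
      by force
    have ab: "a < b" "b < nh G - 2" "rank2 c d (pr G (skip2 c d a)) \<noteq> b"
      using that q pr_K[of a] by (auto simp: quasi_pairs_def contr_graph_simps)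
    then have "pr G (skip2 c d a) \<noteq> skip2 c d b"
      using RS by metis
    then show ?thesis
      using q RS skip2_strict_mono[OF cd(4) ab(1)] skip2_less[OF cd(4) ab(2) cd(2,3)]
      by (auto simp: quasi_pairs_avoiding_def quasi_pairs_def disjoint_pairs_def)
  qed
  show ?thesis
  proof (rule bij_betw_byWitness[where f' = ?g])
    show "?f ` quasi_pairs_avoiding G (c, d) \<subseteq> quasi_pairs ?K"
      "?g ` quasi_pairs ?K \<subseteq> quasi_pairs_avoiding G (c, d)"
      using img_f img_g by blast+
  qed (use RS in \<open>auto simp: quasi_pairs_avoiding_def disjoint_pairs_def\<close>)
qed

lemma htpy_graph_contr_graph:
  assumes W: "wf Q G" and e: "(c, d) \<in> nonloop_edges G"
  shows "htpy_graph (contr_graph Q G c d)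
    = smult (1/2) (\<Sum>q\<in>quasi_pairs_avoiding G (c, d). single (contr_graph Q (rewire G (fst q) (snd q)) c d))"
proof -
  note cd = nonloop_edge_facts[OF W e]
  have "rewire (contr_graph Q G c d) (rank2 c d (fst q)) (rank2 c d (snd q))
      = contr_graph Q (rewire G (fst q) (snd q)) c d"
    if "q \<in> quasi_pairs_avoiding G (c, d)" for q
    using that contr_graph_rewire_disjoint[OF W _ _ _ _ cd(2-5), of "fst q" "snd q"]
    by (auto simp: quasi_pairs_avoiding_def quasi_pairs_def disjoint_pairs_def)
  then show ?thesis
    unfolding htpy_graph_def sum.reindex_bij_betw[OF bij_betw_quasi_pairs_contr_graph[OF W e], symmetric]
    by simp
qed

lemma dE_htpy_graph_minus_htpy_dE_graph:
  assumes W: "wf Q G"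
  shows "dE Q (htpy_graph G) - lin htpy_graph (dE_graph Q G) = dH_graph Q G"
proof -
  let ?sw = "\<lambda>q. rewire G (fst q) (snd q)"
  let ?old = "\<lambda>q. (\<Sum>f\<in>{f \<in> nonloop_edges G. disjoint_pairs f q}. contr Q (?sw q) (fst f) (snd f))"
  have "dE Q (htpy_graph G) = smult (1/2) (\<Sum>q\<in>quasi_pairs G. dE_graph Q (?sw q))"
    unfolding htpy_graph_def dE_def by (simp add: lin_smult finsupp_sum lin_sum)
  also have "\<dots> = smult (1/2) (\<Sum>q\<in>quasi_pairs G. dH_term Q G q + dH_term Q G (partner_pair G q) + ?old q)"
    using dE_graph_rewire[OF W] by (auto intro!: arg_cong[where f = "smult _"] sum.cong)
  finally have new: "dE Q (htpy_graph G)
      = smult (1/2) ((\<Sum>q\<in>quasi_pairs G. dH_term Q G q) + (\<Sum>q\<in>quasi_pairs G. dH_term Q G (partner_pair G q))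
        + (\<Sum>q\<in>quasi_pairs G. ?old q))"
    by (simp add: sum.distrib)
  have "lin htpy_graph (dE_graph Q G) = (\<Sum>e\<in>nonloop_edges G.
      smult (fsign (vx G (fst e)) (vx G (snd e)) * fsign (fst e) (snd e))
        (htpy_graph (contr_graph Q G (fst e) (snd e))))"
    unfolding dE_graph_eq_sum contr_def by (simp add: lin_sum lin_smult)
  also have "\<dots>
      = smult (1/2) (\<Sum>e\<in>nonloop_edges G. \<Sum>q\<in>quasi_pairs_avoiding G e. contr Q (?sw q) (fst e) (snd e))"
    unfolding smult_sum_right
    by (rule sum.cong) (auto simp: htpy_graph_contr_graph[OF W] contr_def smult_sum_right mult.commute)
  also have "(\<Sum>e\<in>nonloop_edges G. \<Sum>q\<in>quasi_pairs_avoiding G e. contr Q (?sw q) (fst e) (snd e))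
      = (\<Sum>q\<in>quasi_pairs G. ?old q)"
    unfolding quasi_pairs_avoiding_def
    by (rule sum.swap_restrict[OF finite_nonloop_edges finite_quasi_pairs])
  finally have old: "lin htpy_graph (dE_graph Q G) = smult (1/2) (\<Sum>q\<in>quasi_pairs G. ?old q)" .
  have "(\<Sum>q\<in>quasi_pairs G. dH_term Q G (partner_pair G q)) = (\<Sum>q\<in>quasi_pairs G. dH_term Q G q)"
    using sum.reindex_bij_betw[OF bij_betw_partner_pair[OF W], of "dH_term Q G"] .
  moreover have "smult (1/2) (X + X) = X" for X :: "'a chain"
    by (rule ext, simp only: smult_apply plus_fun_apply) simp
  ultimately show ?thesis
    unfolding new old dH_graph_eq_sum
    by (simp add: smult_add_right[symmetric] smult_diff_right[symmetric])
qed

definition htpy :: "'q chain \<Rightarrow> 'q chain" where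
  "htpy = lin htpy_graph"

lemma finsupp_htpy: "finsupp x \<Longrightarrow> finsupp (htpy x)"
  unfolding htpy_def by (rule finsupp_lin) (simp_all add: finsupp_htpy_graph)

lemma htpy_gchains: "x \<in> gchains Q \<Longrightarrow> htpy x \<in> gchains Q"
  unfolding htpy_def
  by (rule gchains_lin) (auto simp: gchains_finsupp gchains_wf htpy_graph_gchains)

lemma htpy_relsp: "r \<in> relsp Q \<Longrightarrow> htpy r \<in> relsp Q"
  unfolding htpy_def by (rule lin_relsp_invariant[OF _ htpy_graph_relabel_relsp])

lemma dH_eq_dE_htpy_minus_htpy_dE:
  assumes x: "x \<in> gchains Q"
  shows "dH Q x = dE Q (htpy x) - htpy (dE Q x)"
proof -
  have "dE Q (htpy x) - htpy (dE Q x)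
      = lin (\<lambda>G. dE Q (htpy_graph G)) x - lin (\<lambda>G. lin htpy_graph (dE_graph Q G)) x"
    unfolding dE_def htpy_def
    by (simp add: lin_lin[OF gchains_finsupp[OF x]] finsupp_htpy_graph finsupp_dE_graph)
  also have "\<dots> = lin (dH_graph Q) x"
    unfolding lin_fun_diff[symmetric]
    by (rule lin_cong) (use dE_htpy_graph_minus_htpy_dE_graph gchains_wf[OF x] in auto)
  finally show ?thesis
    by (simp add: dH_def)
qed

lemma dH_cycle_is_boundary:
  assumes x: "x \<in> gchains Q" and "dE Q x \<in> relsp Q"
  shows "\<exists>y\<in>gchains Q. dH Q x - dE Q y \<in> relsp Q"
proof
  show "htpy x \<in> gchains Q"
    by (rule htpy_gchains[OF x])
  show "dH Q x - dE Q (htpy x) \<in> relsp Q"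
    using dH_eq_dE_htpy_minus_htpy_dE[OF x] relsp_uminus[OF htpy_relsp[OF assms(2)]] by simp
qed

definition shift_perm :: "nat \<Rightarrow> (nat \<Rightarrow> nat) \<Rightarrow> nat \<Rightarrow> nat" where
  "shift_perm n f v = (if v < n then v else n + f (v - n))"

lemma shift_perm_id: "shift_perm n id = id"
  by (rule ext) (simp add: shift_perm_def)

lemma shift_perm_comp: "shift_perm n (f \<circ> g) = shift_perm n f \<circ> shift_perm n g"
  by (rule ext) (simp add: shift_perm_def)

lemma shift_perm_transpose:
  "shift_perm n (Transposition.transpose a b) = Transposition.transpose (n + a) (n + b)"
  by (rule ext) (auto simp: shift_perm_def Transposition.transpose_def)

lemma shift_perm_permutes_sign:
  assumes "p permutes {..<(m::nat)}"
  shows "shift_perm n p permutes {..<n + m} \<and> sign (shift_perm n p) = sign p"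
  using assms finite_lessThan[of m]
proof (induction rule: permutes_induct)
  case id
  have "shift_perm n (\<lambda>a. a) = (\<lambda>a. a)"
    by (rule ext) (simp add: shift_perm_def)
  then show ?case
    using permutes_id[of "{..<n+m}"] by (simp add: id_def)
next
  case (swap a b p)
  let ?t = "Transposition.transpose a b" and ?t' = "Transposition.transpose (n + a) (n + b)"
  have "?t' permutes {..<n + m}"
    by (rule permutes_swap_id) (use swap in auto)
  then have "shift_perm n (?t \<circ> p) permutes {..<n + m}"
    unfolding shift_perm_comp shift_perm_transpose
    by (rule permutes_compose[rotated]) (use swap in auto)
  moreover have "sign (shift_perm n (?t \<circ> p)) = sign ?t' * sign (shift_perm n p)"
    unfolding shift_perm_comp shift_perm_transpose
    by (rule sign_compose[OF permutation_swap_id]) (use swap permutes_imp_permutation[of "{..<n+m}"] in auto)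
  moreover have "sign (?t \<circ> p) = sign ?t * sign p"
    by (rule sign_compose[OF permutation_swap_id]) (use swap permutes_imp_permutation[of "{..<m}"] in auto)
  ultimately show ?case
    using swap by (simp add: sign_swap_id comp_def)
qed

lemma inv_shift_perm: "p permutes {..<(m::nat)} \<Longrightarrow> inv (shift_perm n p) = shift_perm n (inv p)"
  by (rule inv_unique_comp) (simp_all add: shift_perm_comp[symmetric] permutes_inv_o shift_perm_id)

definition move_to_front :: "nat \<Rightarrow> nat \<Rightarrow> nat" where
  "move_to_front n v = (if v < n then v + 1 else if v = n then 0 else v)"

lemma move_to_front_Suc: "move_to_front (Suc n) = Transposition.transpose 0 (Suc n) \<circ> move_to_front n"
  by (rule ext) (auto simp: move_to_front_def Transposition.transpose_def)

lemma move_to_front_permutes_sign: "move_to_front n permutes {..n} \<and> sign (move_to_front n) = (-1) ^ n"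
proof (induction n)
  case 0
  have "move_to_front 0 = (\<lambda>a. a)"
    by (rule ext) (simp add: move_to_front_def)
  then show ?case
    using permutes_id[of "{..0}"] by (simp add: id_def)
next
  case (Suc n)
  have t: "Transposition.transpose 0 (Suc n) permutes {..Suc n}"
    by (rule permutes_swap_id) auto
  have c: "move_to_front n permutes {..Suc n}"
    using Suc.IH by (auto intro: permutes_subset)
  have "move_to_front (Suc n) permutes {..Suc n}"
    unfolding move_to_front_Suc by (rule permutes_compose[OF c t])
  moreover have "sign (move_to_front (Suc n))
      = sign (Transposition.transpose 0 (Suc n)) * sign (move_to_front n)"
    unfolding move_to_front_Suc
    by (rule sign_compose[OF permutation_swap_id]) (use c permutes_imp_permutation in auto)
  ultimately show ?case
    using Suc.IH by (simp add: sign_swap_id)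
qed

lemma inv_move_to_front: "inv (move_to_front n) = (\<lambda>v. if v = 0 then n else if v \<le> n then v - 1 else v)"
  by (rule inv_unique_comp) (auto simp: fun_eq_iff move_to_front_def)

lemma mu_graph_simps:
  "nv (mu_graph Q G1 G2) = nv G1 + nv G2"
  "nh (mu_graph Q G1 G2) = nh G1 + nh G2"
  "vx (mu_graph Q G1 G2) h = (if h < nh G1 then vx G1 h
                 else if h < nh G1 + nh G2 then nv G1 + vx G2 (h - nh G1) else 0)"
  "pr (mu_graph Q G1 G2) h = (if h < nh G1 then pr G1 h
                 else if h < nh G1 + nh G2 then nh G1 + pr G2 (h - nh G1) else 0)"
  "st (mu_graph Q G1 G2) v = (if v < nv G1 then st G1 v
                 else if v < nv G1 + nv G2 then tr Q (\<lambda>h. h + nh G1) (st G2 (v - nv G1))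
                 else undefined)"
  by (simp_all add: mu_graph_def)

lemma hes_mu_graph_left:
  assumes "wf Q G1" "v < nv G1"
  shows "hes (mu_graph Q G1 G2) v = hes G1 v"
  using assms wf_vx_less[OF assms(1)] unfolding hes_def mu_graph_simps by auto

lemma hes_mu_graph_right:
  assumes W1: "wf Q G1" and v: "nv G1 \<le> v"
  shows "hes (mu_graph Q G1 G2) v = (\<lambda>h. h + nh G1) ` hes G2 (v - nv G1)"
proof (rule set_eqI)
  fix h
  show "h \<in> hes (mu_graph Q G1 G2) v \<longleftrightarrow> h \<in> (\<lambda>h. h + nh G1) ` hes G2 (v - nv G1)"
  proof (cases "h < nh G1")
    case True
    then show ?thesis
      using v wf_vx_less[OF W1 True] unfolding hes_def mu_graph_simps by auto
  next
    case False
    then have "h = (h - nh G1) + nh G1"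
      by simp
    then show ?thesis
      using False v
      unfolding hes_def mu_graph_simps by (auto simp: image_iff intro: exI[of _ "h - nh G1"])
  qed
qed

context mated
begin

lemma wf_mu_graph:
  assumes W1: "wf Q G1" and W2: "wf Q G2"
  shows "wf Q (mu_graph Q G1 G2)"
proof -
  let ?M = "mu_graph Q G1 G2"
  have edges: "vx ?M h < nv ?M \<and> pr ?M h < nh ?M \<and> pr ?M h \<noteq> h \<and> pr ?M (pr ?M h) = h" if "h < nh ?M" for h
  proof (cases "h < nh G1")
    case True
    then show ?thesis
      using wf_vx_less[OF W1 True] wf_pr_less[OF W1 True] wf_pr_neq[OF W1 True] wf_pr_pr[OF W1 True]
      by (simp add: mu_graph_simps)
  next
    case False
    then have h2: "h - nh G1 < nh G2"
      using that by (simp add: mu_graph_simps)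
    then show ?thesis
      using False that wf_vx_less[OF W2 h2] wf_pr_less[OF W2 h2] wf_pr_neq[OF W2 h2] wf_pr_pr[OF W2 h2]
      by (simp add: mu_graph_simps)
  qed
  have structures: "st ?M v \<in> Qs Q (hes ?M v)" if "v < nv ?M" for v
  proof (cases "v < nv G1")
    case True
    then show ?thesis
      using wf_st[OF W1 True] hes_mu_graph_left[OF W1 True] by (simp add: mu_graph_simps)
  next
    case False
    then have v2: "v - nv G1 < nv G2"
      using that by (simp add: mu_graph_simps)
    have "tr Q (\<lambda>h. h + nh G1) (st G2 (v - nv G1)) \<in> Qs Q ((\<lambda>h. h + nh G1) ` hes G2 (v - nv G1))"
      by (rule tr_in_Qs[OF finite_hes _ wf_st[OF W2 v2]]) (simp add: inj_on_def)
    then show ?thesis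
      using False that hes_mu_graph_right[OF W1, of v G2] by (simp add: mu_graph_simps)
  qed
  show ?thesis
    unfolding wf_def using edges structures by (simp add: mu_graph_simps)
qed

lemma mu_graph_relabel_left:
  assumes W1: "wf Q G1" and W2: "wf Q G2" and s: "\<sigma> permutes {..<nv G1}" and t: "\<tau> permutes {..<nh G1}"
  shows "mu_graph Q (relabel Q \<sigma> \<tau> G1) G2 = relabel Q \<sigma> \<tau> (mu_graph Q G1 G2)"
proof (rule qgraph_eqI)
  let ?L = "mu_graph Q (relabel Q \<sigma> \<tau> G1) G2" and ?R = "relabel Q \<sigma> \<tau> (mu_graph Q G1 G2)"
  note Pt = permutes_lessThan_facts[OF t] and Ps = permutes_lessThan_facts[OF s]
  have fixed: "\<tau> x = x" "inv \<tau> x = x" if "nh G1 \<le> x" for x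
    using that permutes_not_in[OF t] permutes_not_in[OF permutes_inv[OF t]] by auto
  have fixed_v: "\<sigma> x = x" "inv \<sigma> x = x" if "nv G1 \<le> x" for x
    using that permutes_not_in[OF s] permutes_not_in[OF permutes_inv[OF s]] by auto
  show "vx ?L = vx ?R"
    unfolding fun_eq_iff using Pt fixed fixed_v by (auto simp: mu_graph_simps relabel_simps)
  show "pr ?L = pr ?R"
    unfolding fun_eq_iff
    using Pt fixed wf_pr_less[OF W1] by (auto simp: mu_graph_simps relabel_simps)
  have "tr Q \<tau> (tr Q (\<lambda>h. h + nh G1) (st G2 w)) = tr Q (\<lambda>h. h + nh G1) (st G2 w)" if "w < nv G2" for w
    by (rule tr_tr_eq[OF finite_hes _ _ wf_st[OF W2 that]])
      (auto simp: inj_on_def fixed intro: inj_on_subset[OF permutes_inj_on[OF t]])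
  then show "st ?L = st ?R"
    unfolding fun_eq_iff using Ps fixed_v by (auto simp: mu_graph_simps relabel_simps)
qed (simp_all add: mu_graph_simps relabel_simps)

lemma mu_graph_relabel_right:
  assumes W1: "wf Q G1" and W2: "wf Q G2" and s: "\<sigma> permutes {..<nv G2}" and t: "\<tau> permutes {..<nh G2}"
  shows "mu_graph Q G1 (relabel Q \<sigma> \<tau> G2)
    = relabel Q (shift_perm (nv G1) \<sigma>) (shift_perm (nh G1) \<tau>) (mu_graph Q G1 G2)"
proof (rule qgraph_eqI)
  let ?L = "mu_graph Q G1 (relabel Q \<sigma> \<tau> G2)"
    and ?R = "relabel Q (shift_perm (nv G1) \<sigma>) (shift_perm (nh G1) \<tau>) (mu_graph Q G1 G2)"
  note Pt = permutes_lessThan_facts[OF t] and Ps = permutes_lessThan_facts[OF s]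
  note inv_shift = inv_shift_perm[OF t] inv_shift_perm[OF s]
  show "vx ?L = vx ?R"
    unfolding fun_eq_iff
    using Pt wf_vx_less[OF W1] by (auto simp: mu_graph_simps relabel_simps inv_shift shift_perm_def)
  show "pr ?L = pr ?R"
    unfolding fun_eq_iff
    using Pt wf_pr_less[OF W1] by (auto simp: mu_graph_simps relabel_simps inv_shift shift_perm_def)
  have left: "tr Q (shift_perm (nh G1) \<tau>) (st G1 v) = st G1 v" if "v < nv G1" for v
    by (rule tr_eq_self[OF wf_st[OF W1 that]]) (auto simp: shift_perm_def hes_def)
  have right: "tr Q (\<lambda>h. h + nh G1) (tr Q \<tau> (st G2 w))
      = tr Q (shift_perm (nh G1) \<tau>) (tr Q (\<lambda>h. h + nh G1) (st G2 w))" if "w < nv G2" for w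
  proof -
    have "tr Q (\<lambda>h. h + nh G1) (tr Q \<tau> (st G2 w)) = tr Q (\<lambda>h. \<tau> h + nh G1) (st G2 w)"
      by (rule tr_tr_eq[OF finite_hes _ _ wf_st[OF W2 that]]) (auto simp: inj_on_def Pt)
    also have "\<dots> = tr Q (shift_perm (nh G1) \<tau>) (tr Q (\<lambda>h. h + nh G1) (st G2 w))"
    proof (rule tr_tr_eq[OF finite_hes _ _ wf_st[OF W2 that], symmetric])
      show "inj_on (\<lambda>h. h + nh G1) (hes G2 w)"
        by (simp add: inj_on_def)
      show "inj_on (shift_perm (nh G1) \<tau>) ((\<lambda>h. h + nh G1) ` hes G2 w)"
        by (rule permutes_inj_on[OF shift_perm_permutes_sign[OF t, THEN conjunct1]])
    qed (simp add: shift_perm_def)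
    finally show ?thesis .
  qed
  show "st ?L = st ?R"
  proof
    fix v
    consider "v < nv G1" | "nv G1 \<le> v" "v < nv G1 + nv G2" | "nv G1 + nv G2 \<le> v"
      by linarith
    then show "st ?L v = st ?R v"
    proof cases
      case 2
      then have "v - nv G1 < nv G2"
        by linarith
      then show ?thesis
        using 2 right[of "inv \<sigma> (v - nv G1)"] Ps
        by (simp add: mu_graph_simps relabel_simps inv_shift shift_perm_def)
    qed (use left in \<open>simp_all add: mu_graph_simps relabel_simps inv_shift shift_perm_def\<close>)
  qed
qed (simp_all add: mu_graph_simps relabel_simps)

end

context
  fixes Q :: "'q species" and G :: "'q qgraph" and a b :: nat
  assumes W: "wf Q G" and e: "(a, b) \<in> nonloop_edges G"
begin

lemma pr_contr_graph_nonloop: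
  assumes h: "h < nh G - 2"
  shows "pr (contr_graph Q G a b) h = rank2 a b (pr G (skip2 a b h))"
  using pr_contr_graph_edge[OF W] nonloop_edge_facts[OF W e] h by simp

lemma pr_contr_graph_involution:
  assumes h: "h < nh G - 2"
  shows "pr (contr_graph Q G a b) h < nh G - 2 \<and> pr (contr_graph Q G a b) h \<noteq> h
    \<and> pr (contr_graph Q G a b) (pr (contr_graph Q G a b) h) = h"
proof -
  note ab = nonloop_edge_facts[OF W e]
  let ?k = "skip2 a b h"
  have k: "?k < nh G" "?k \<noteq> a" "?k \<noteq> b"
    using skip2_less[OF ab(4) h ab(2,3)] skip2_neq_left[OF ab(4)] skip2_neq_right[OF ab(4)] by auto
  have pk: "pr G ?k < nh G" "pr G ?k \<noteq> a" "pr G ?k \<noteq> b"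
    using k ab wf_pr_less[OF W] wf_pr_pr[OF W] by metis+
  have less: "pr (contr_graph Q G a b) h < nh G - 2"
    using pr_contr_graph_nonloop[OF h] rank2_less[OF ab(4) pk(1) ab(2,3) pk(2,3)] by simp
  moreover have "pr (contr_graph Q G a b) h \<noteq> h"
    using pr_contr_graph_nonloop[OF h] rank2_inj[OF ab(4) pk(2,3) k(2,3)] wf_pr_neq[OF W k(1)]
      rank2_skip2[OF ab(4)] by metis
  moreover have "pr (contr_graph Q G a b) (pr (contr_graph Q G a b) h) = h"
    using pr_contr_graph_nonloop[OF h] pr_contr_graph_nonloop[OF less] wf_pr_pr[OF W k(1)]
      skip2_rank2[OF ab(4) pk(2,3)] rank2_skip2[OF ab(4)] by simp
  ultimately show ?thesis
    by blast
qed

lemma vx_contr_graph_less: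
  assumes h: "h < nh G - 2"
  shows "vx (contr_graph Q G a b) h < nv G - 1"
proof -
  note ab = nonloop_edge_facts[OF W e]
  let ?v = "vx G (skip2 a b h)"
  have "?v < nv G"
    using wf_vx_less[OF W skip2_less[OF ab(4) h ab(2,3)]] .
  then have "?v \<noteq> vx G a \<Longrightarrow> ?v \<noteq> vx G b \<Longrightarrow> rank2 (vx G a) (vx G b) ?v < nv G - 2"
    using rank2_less[OF ab(9) _ ab(7,8)] by blast
  then show ?thesis
    using h ab(7-9) by (auto simp: contr_graph_simps)
qed

lemma hes_contr_graph_merged:
  "hes (contr_graph Q G a b) 0 = rank2 a b ` ((hes G (vx G a) - {a}) \<union> (hes G (vx G b) - {b}))"
proof (rule set_eqI)
  note ab = nonloop_edge_facts[OF W e]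
  note RS = skip2_rank2[OF ab(4)] rank2_skip2[OF ab(4)] skip2_neq_left[OF ab(4)] skip2_neq_right[OF ab(4)]
  let ?M = "(hes G (vx G a) - {a}) \<union> (hes G (vx G b) - {b})"
  fix h
  show "h \<in> hes (contr_graph Q G a b) 0 \<longleftrightarrow> h \<in> rank2 a b ` ?M"
  proof
    assume "h \<in> hes (contr_graph Q G a b) 0"
    then have h: "h < nh G - 2" "vx G (skip2 a b h) = vx G a \<or> vx G (skip2 a b h) = vx G b"
      by (auto simp: hes_def contr_graph_simps split: if_splits)
    then have "skip2 a b h \<in> ?M"
      using skip2_less[OF ab(4) h(1) ab(2,3)] RS by (auto simp: hes_def)
    then show "h \<in> rank2 a b ` ?M"
      using RS by (metis image_eqI)
  next
    assume "h \<in> rank2 a b ` ?M"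
    then obtain k where k: "k \<in> ?M" "h = rank2 a b k"
      by blast
    then have "k < nh G" "k \<noteq> a" "k \<noteq> b" "vx G k = vx G a \<or> vx G k = vx G b"
      using ab by (auto simp: hes_def)
    then show "h \<in> hes (contr_graph Q G a b) 0"
      using k ab RS rank2_less[OF ab(4) _ ab(2,3)] by (auto simp: hes_def contr_graph_simps)
  qed
qed

lemma hes_contr_graph_other:
  assumes w: "0 < w" "w < nv G - 1"
  shows "hes (contr_graph Q G a b) w = rank2 a b ` hes G (skip2 (vx G a) (vx G b) (w - 1))"
proof (rule set_eqI)
  note ab = nonloop_edge_facts[OF W e]
  note RS = skip2_rank2[OF ab(4)] rank2_skip2[OF ab(4)]
  let ?i = "vx G a" and ?j = "vx G b"
  let ?u = "skip2 ?i ?j (w - 1)"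
  have u: "?u < nv G" "?u \<noteq> ?i" "?u \<noteq> ?j"
    using skip2_less[OF ab(9) _ ab(7,8)] w skip2_neq_left[OF ab(9)] skip2_neq_right[OF ab(9)]
    by auto
  have w_eq: "Suc (rank2 ?i ?j ?u) = w"
    using rank2_skip2[OF ab(9)] w by simp
  fix h
  show "h \<in> hes (contr_graph Q G a b) w \<longleftrightarrow> h \<in> rank2 a b ` hes G ?u"
  proof
    assume "h \<in> hes (contr_graph Q G a b) w"
    then have h: "h < nh G - 2" "vx G (skip2 a b h) \<noteq> ?i" "vx G (skip2 a b h) \<noteq> ?j"
      "Suc (rank2 ?i ?j (vx G (skip2 a b h))) = w"
      using w by (auto simp: hes_def contr_graph_simps split: if_splits)
    then have "vx G (skip2 a b h) = ?u"
      using rank2_inj[OF ab(9) h(2,3) u(2,3)] w_eq by simp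
    then have "skip2 a b h \<in> hes G ?u"
      using skip2_less[OF ab(4) h(1) ab(2,3)] by (simp add: hes_def)
    then show "h \<in> rank2 a b ` hes G ?u"
      using RS by (metis image_eqI)
  next
    assume "h \<in> rank2 a b ` hes G ?u"
    then obtain k where k: "k < nh G" "vx G k = ?u" "h = rank2 a b k"
      by (auto simp: hes_def)
    moreover have "k \<noteq> a" "k \<noteq> b"
      using k u by auto
    ultimately show "h \<in> hes (contr_graph Q G a b) w"
      using RS u w_eq rank2_less[OF ab(4) k(1) ab(2,3)] by (auto simp: hes_def contr_graph_simps)
  qed
qed

end

lemma (in mated) wf_contr_graph:
  assumes W: "wf Q G" and e: "(a, b) \<in> nonloop_edges G"
  shows "wf Q (contr_graph Q G a b)"
proof -
  note ab = nonloop_edge_facts[OF W e]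
  let ?K = "contr_graph Q G a b"
  have merged: "st ?K 0 \<in> Qs Q (hes ?K 0)"
  proof -
    let ?M = "(hes G (vx G a) - {a}) \<union> (hes G (vx G b) - {b})"
    have mate: "mate Q a (st G (vx G a)) b (st G (vx G b)) \<in> Qs Q ?M"
      by (rule mate_in_Qs[OF finite_hes finite_hes _ _ _ wf_st[OF W ab(7)] wf_st[OF W ab(8)]])
        (use ab in \<open>auto simp: hes_def\<close>)
    have "tr Q (rank2 a b) (mate Q a (st G (vx G a)) b (st G (vx G b))) \<in> Qs Q (rank2 a b ` ?M)"
      by (rule tr_in_Qs[OF _ inj_on_rank2[OF ab(4)] mate]) (use ab in \<open>auto simp: finite_hes hes_def\<close>)
    then show ?thesis
      unfolding hes_contr_graph_merged[OF W e] by (simp add: contr_graph_simps)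
  qed
  have other: "st ?K w \<in> Qs Q (hes ?K w)" if w: "0 < w" "w < nv G - 1" for w
  proof -
    let ?u = "skip2 (vx G a) (vx G b) (w - 1)"
    have u: "?u < nv G" "?u \<noteq> vx G a" "?u \<noteq> vx G b"
      using skip2_less[OF ab(9) _ ab(7,8)] w skip2_neq_left[OF ab(9)] skip2_neq_right[OF ab(9)]
      by auto
    have "hes G ?u \<inter> {a, b} = {}"
      using u by (auto simp: hes_def)
    then have "tr Q (rank2 a b) (st G ?u) \<in> Qs Q (rank2 a b ` hes G ?u)"
      by (rule tr_in_Qs[OF finite_hes inj_on_rank2[OF ab(4)] wf_st[OF W u(1)]])
    then show ?thesis
      using w unfolding hes_contr_graph_other[OF W e w] by (simp add: contr_graph_simps)
  qed
  have "2 \<le> nv G"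
    using ab(7-9) by arith
  have edges: "\<forall>h < nh ?K. vx ?K h < nv ?K \<and> pr ?K h < nh ?K \<and> pr ?K h \<noteq> h \<and> pr ?K (pr ?K h) = h"
    using pr_contr_graph_involution[OF W e] vx_contr_graph_less[OF W e]
    by (simp add: contr_graph_simps(1,2))
  have structures: "\<forall>v < nv ?K. st ?K v \<in> Qs Q (hes ?K v)"
  proof (intro allI impI)
    fix v
    assume "v < nv ?K"
    then show "st ?K v \<in> Qs Q (hes ?K v)"
      using merged other by (cases "v = 0") (simp_all add: contr_graph_simps(1))
  qed
  show ?thesis
    unfolding wf_def
    by (intro conjI edges structures) (use \<open>2 \<le> nv G\<close> in \<open>simp_all add: contr_graph_simps\<close>)
qed

context mated
begin

context
  fixes G1 G2 :: "'q qgraph" and a b :: nat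
  assumes W1: "wf Q G1" and W2: "wf Q G2" and e: "(a, b) \<in> nonloop_edges G1"
begin

lemma nonloop_edge_mu_graph_left: "(a, b) \<in> nonloop_edges (mu_graph Q G1 G2)"
  using e by (auto simp: nonloop_edges_def mu_graph_simps)

lemma vx_contr_graph_mu_graph_left:
  "vx (contr_graph Q (mu_graph Q G1 G2) a b) h = vx (mu_graph Q (contr_graph Q G1 a b) G2) h"
proof -
  note ab = nonloop_edge_facts[OF W1 e]
  consider (left) "h < nh G1 - 2" | (right) "nh G1 - 2 \<le> h" "h < nh G1 + nh G2 - 2"
    | (outside) "nh G1 + nh G2 - 2 \<le> h"
    by linarith
  then show ?thesis
  proof cases
    case left
    have "skip2 a b h < nh G1" "h < nh G1 + nh G2 - 2"
      using skip2_less[OF ab(4) left ab(2,3)] left by linarith+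
    then show ?thesis
      using left ab(2,3) by (simp add: contr_graph_simps mu_graph_simps)
  next
    case right
    define t where "t = h - (nh G1 - 2)"
    have t: "t < nh G2" "skip2 a b h = nh G1 + t"
      using right ab(1,3) skip2_above[OF ab(4), of h] unfolding t_def by auto
    have "vx (contr_graph Q (mu_graph Q G1 G2) a b) h = Suc (rank2 (vx G1 a) (vx G1 b) (nv G1 + vx G2 t))"
      using right t ab(2,3,7,8) by (simp add: contr_graph_simps mu_graph_simps)
    also have "\<dots> = nv G1 - 1 + vx G2 t"
      using rank2_above[OF ab(9), of "nv G1 + vx G2 t"] ab(7-9) by auto
    also have "\<dots> = vx (mu_graph Q (contr_graph Q G1 a b) G2) h"
      using right ab(1,3) unfolding t_def by (simp add: contr_graph_simps mu_graph_simps)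
    finally show ?thesis .
  next
    case outside
    then show ?thesis
      using ab(1,3) by (simp add: contr_graph_simps mu_graph_simps)
  qed
qed

lemma pr_contr_graph_mu_graph_left:
  "pr (contr_graph Q (mu_graph Q G1 G2) a b) h = pr (mu_graph Q (contr_graph Q G1 a b) G2) h"
proof -
  note ab = nonloop_edge_facts[OF W1 e]
  note pr_M = pr_contr_graph_nonloop[OF wf_mu_graph[OF W1 W2] nonloop_edge_mu_graph_left]
  consider (left) "h < nh G1 - 2" | (right) "nh G1 - 2 \<le> h" "h < nh G1 + nh G2 - 2"
    | (outside) "nh G1 + nh G2 - 2 \<le> h"
    by linarith
  then show ?thesis
  proof cases
    case left
    have "skip2 a b h < nh G1" "h < nh G1 + nh G2 - 2"
      using skip2_less[OF ab(4) left ab(2,3)] left by linarith+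
    then show ?thesis
      using left pr_M[of h] pr_contr_graph_nonloop[OF W1 e left]
      by (simp add: mu_graph_simps contr_graph_simps)
  next
    case right
    define t where "t = h - (nh G1 - 2)"
    have t: "t < nh G2" "skip2 a b h = nh G1 + t"
      using right ab(1,3) skip2_above[OF ab(4), of h] unfolding t_def by auto
    have "pr (contr_graph Q (mu_graph Q G1 G2) a b) h = rank2 a b (nh G1 + pr G2 t)"
      using right t pr_M[of h] by (simp add: mu_graph_simps)
    also have "\<dots> = nh G1 - 2 + pr G2 t"
      using rank2_above[OF ab(4), of "nh G1 + pr G2 t"] ab(1,3) by auto
    also have "\<dots> = pr (mu_graph Q (contr_graph Q G1 a b) G2) h"
      using right ab(1,3) unfolding t_def by (simp add: contr_graph_simps mu_graph_simps)
    finally show ?thesis .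
  next
    case outside
    then show ?thesis
      using ab(1,3) by (simp add: contr_graph_simps mu_graph_simps)
  qed
qed

end

lemma st_contr_graph_mu_graph_left:
  assumes W1: "wf Q G1" and W2: "wf Q G2" and e: "(a, b) \<in> nonloop_edges G1"
  shows "st (contr_graph Q (mu_graph Q G1 G2) a b) w = st (mu_graph Q (contr_graph Q G1 a b) G2) w"
proof -
  note ab = nonloop_edge_facts[OF W1 e]
  have nv2: "2 \<le> nv G1"
    using ab(7-9) by arith
  consider (merged) "w = 0" | (left) "0 < w" "w < nv G1 - 1"
    | (right) "nv G1 - 1 \<le> w" "w < nv G1 + nv G2 - 1" | (outside) "nv G1 + nv G2 - 1 \<le> w"
    by linarith
  then show ?thesis
  proof cases
    case merged
    then show ?thesis
      using ab(2,3,7,8) nv2 by (simp add: contr_graph_simps mu_graph_simps)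
  next
    case left
    have "skip2 (vx G1 a) (vx G1 b) (w - 1) < nv G1" "w < nv G1 + nv G2 - 1"
      using skip2_less[OF ab(9), of "w - 1"] left ab(7,8) by auto
    then show ?thesis
      using left ab(2,3) by (simp add: contr_graph_simps mu_graph_simps)
  next
    case right
    define t where "t = w - (nv G1 - 1)"
    have t: "t < nv G2" "skip2 (vx G1 a) (vx G1 b) (w - 1) = nv G1 + t" "w \<noteq> 0"
      using right nv2 ab(7,8) skip2_above[OF ab(9), of "w - 1"] unfolding t_def by auto
    have "st (contr_graph Q (mu_graph Q G1 G2) a b) w = tr Q (rank2 a b) (tr Q (\<lambda>h. h + nh G1) (st G2 t))"
      using right t nv2 ab(2,3,7,8) by (simp add: contr_graph_simps mu_graph_simps)
    also have "\<dots> = tr Q (\<lambda>h. h + (nh G1 - 2)) (st G2 t)"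
    proof (rule tr_tr_eq[OF finite_hes _ _ wf_st[OF W2 t(1)]])
      show "inj_on (\<lambda>h. h + nh G1) (hes G2 t)"
        by (simp add: inj_on_def)
      show "inj_on (rank2 a b) ((\<lambda>h. h + nh G1) ` hes G2 t)"
        by (rule inj_on_rank2[OF ab(4)]) (use ab(2,3) in auto)
      show "rank2 a b (s + nh G1) = s + (nh G1 - 2)" for s
        using rank2_above[OF ab(4), of "s + nh G1"] ab(1,3) by auto
    qed
    also have "\<dots> = st (mu_graph Q (contr_graph Q G1 a b) G2) w"
      using right nv2 unfolding t_def by (simp add: contr_graph_simps mu_graph_simps)
    finally show ?thesis .
  next
    case outside
    then have "w \<noteq> 0" "\<not> w < nv G1 + nv G2 - 1" "\<not> w < nv G1 - 1 + nv G2"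
      using nv2 by arith+
    then show ?thesis
      by (simp add: contr_graph_simps mu_graph_simps)
  qed
qed

lemma contr_graph_mu_graph_left:
  assumes W1: "wf Q G1" and "wf Q G2" and e: "(a, b) \<in> nonloop_edges G1"
  shows "contr_graph Q (mu_graph Q G1 G2) a b = mu_graph Q (contr_graph Q G1 a b) G2"
proof (rule qgraph_eqI)
  note ab = nonloop_edge_facts[OF W1 e]
  show "nv (contr_graph Q (mu_graph Q G1 G2) a b) = nv (mu_graph Q (contr_graph Q G1 a b) G2)"
    using ab(7-9) by (simp add: contr_graph_simps mu_graph_simps)
  show "nh (contr_graph Q (mu_graph Q G1 G2) a b) = nh (mu_graph Q (contr_graph Q G1 a b) G2)"
    using ab(1,3) by (simp add: contr_graph_simps mu_graph_simps)
qed (use vx_contr_graph_mu_graph_left[OF assms] pr_contr_graph_mu_graph_left[OF assms]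
      st_contr_graph_mu_graph_left[OF assms] in auto)

lemma st_relabel_id:
  assumes "wf Q K" "\<sigma> permutes {..<nv K}" "w < nv K"
  shows "st (relabel Q \<sigma> id K) w = st K (inv \<sigma> w)"
  using assms tr_id[OF wf_st[OF assms(1)]] permutes_lessThan_facts[OF assms(2)]
  by (simp add: relabel_simps)

lemma tr_rank2_shift:
  assumes ab: "a \<noteq> b" and S: "finite S" "S \<inter> {a, b} = {}" and x: "x \<in> Qs Q S"
  shows "tr Q (rank2 (n + a) (n + b)) (tr Q (\<lambda>h. h + n) x) = tr Q (\<lambda>h. h + n) (tr Q (rank2 a b) x)"
proof -
  have "tr Q (rank2 (n + a) (n + b)) (tr Q (\<lambda>h. h + n) x) = tr Q (\<lambda>s. rank2 a b s + n) x"
  proof (rule tr_tr_eq[OF S(1) _ _ x])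
    show "inj_on (\<lambda>h. h + n) S"
      by (simp add: inj_on_def)
    show "inj_on (rank2 (n + a) (n + b)) ((\<lambda>h. h + n) ` S)"
      by (rule inj_on_rank2) (use ab S in auto)
    show "rank2 (n + a) (n + b) (s + n) = rank2 a b s + n" for s
      using rank2_shift[OF ab, of n s] by (simp add: add.commute)
  qed
  also have "\<dots> = tr Q (\<lambda>h. h + n) (tr Q (rank2 a b) x)"
    by (rule tr_tr_eq[OF S(1) inj_on_rank2[OF ab S(2)] _ x, symmetric]) (simp_all add: inj_on_def)
  finally show ?thesis .
qed

context
  fixes G1 G2 :: "'q qgraph" and a b :: nat
  assumes W1: "wf Q G1" and W2: "wf Q G2" and e: "(a, b) \<in> nonloop_edges G2"
begin

lemma nonloop_edge_mu_graph_right: "(nh G1 + a, nh G1 + b) \<in> nonloop_edges (mu_graph Q G1 G2)"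
  using nonloop_edge_facts[OF W2 e] by (auto simp: nonloop_edges_def mu_graph_simps)

lemma vx_contr_graph_mu_graph_right:
  "vx (contr_graph Q (mu_graph Q G1 G2) (nh G1 + a) (nh G1 + b)) h
   = vx (relabel Q (move_to_front (nv G1)) id (mu_graph Q G1 (contr_graph Q G2 a b))) h"
proof -
  note ab = nonloop_edge_facts[OF W2 e]
  consider (left) "h < nh G1" | (right) "nh G1 \<le> h" "h < nh G1 + nh G2 - 2"
    | (outside) "nh G1 + nh G2 - 2 \<le> h"
    by linarith
  then show ?thesis
  proof cases
    case left
    have "vx G1 h < nv G1" "h < nh G1 + nh G2 - 2"
      using wf_vx_less[OF W1 left] left ab(1,3) by auto
    then show ?thesis
      using left ab(2,3) skip2_shift_below[OF ab(4) left] rank2_shift_below[OF ab(9), of "vx G1 h" "nv G1"]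
      by (simp add: contr_graph_simps mu_graph_simps relabel_simps move_to_front_def)
  next
    case right
    define t where "t = h - nh G1"
    have t: "h = nh G1 + t" "t < nh G2 - 2"
      using right unfolding t_def by arith+
    have k: "skip2 a b t < nh G2"
      using skip2_less[OF ab(4) t(2) ab(2,3)] .
    let ?v = "vx G2 (skip2 a b t)"
    have "vx (contr_graph Q (mu_graph Q G1 G2) (nh G1 + a) (nh G1 + b)) h
        = (if ?v = vx G2 a \<or> ?v = vx G2 b then 0 else Suc (nv G1 + rank2 (vx G2 a) (vx G2 b) ?v))"
      using right t k ab(2,3) skip2_shift[OF ab(4)] rank2_shift[OF ab(9)]
      by (simp add: contr_graph_simps mu_graph_simps)
    also have "\<dots> = vx (relabel Q (move_to_front (nv G1)) id (mu_graph Q G1 (contr_graph Q G2 a b))) h"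
      using right t by (simp add: contr_graph_simps mu_graph_simps relabel_simps move_to_front_def)
    finally show ?thesis .
  next
    case outside
    then have "\<not> h < nh G1 + nh G2 - 2" "\<not> h < nh G1 + (nh G2 - 2)"
      using ab(1,3) by arith+
    then show ?thesis
      by (simp add: contr_graph_simps mu_graph_simps relabel_simps)
  qed
qed

lemma pr_contr_graph_mu_graph_right:
  "pr (contr_graph Q (mu_graph Q G1 G2) (nh G1 + a) (nh G1 + b)) h
   = pr (relabel Q (move_to_front (nv G1)) id (mu_graph Q G1 (contr_graph Q G2 a b))) h"
proof -
  note ab = nonloop_edge_facts[OF W2 e]
  note pr_M = pr_contr_graph_nonloop[OF wf_mu_graph[OF W1 W2] nonloop_edge_mu_graph_right]
  consider (left) "h < nh G1" | (right) "nh G1 \<le> h" "h < nh G1 + nh G2 - 2"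
    | (outside) "nh G1 + nh G2 - 2 \<le> h"
    by linarith
  then show ?thesis
  proof cases
    case left
    have "pr G1 h < nh G1" "h < nh G1 + nh G2 - 2"
      using wf_pr_less[OF W1 left] left ab(1,3) by auto
    then show ?thesis
      using left pr_M[of h] skip2_shift_below[OF ab(4) left] rank2_shift_below[OF ab(4), of "pr G1 h" "nh G1"]
      by (simp add: contr_graph_simps mu_graph_simps relabel_simps)
  next
    case right
    define t where "t = h - nh G1"
    have t: "h = nh G1 + t" "t < nh G2 - 2"
      using right unfolding t_def by arith+
    have "skip2 a b t < nh G2"
      using skip2_less[OF ab(4) t(2) ab(2,3)] .
    then have "pr (contr_graph Q (mu_graph Q G1 G2) (nh G1 + a) (nh G1 + b)) h
        = nh G1 + rank2 a b (pr G2 (skip2 a b t))"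
      using right t pr_M[of h] skip2_shift[OF ab(4)] rank2_shift[OF ab(4)]
      by (simp add: mu_graph_simps)
    also have "\<dots> = pr (relabel Q (move_to_front (nv G1)) id (mu_graph Q G1 (contr_graph Q G2 a b))) h"
      using right t pr_contr_graph_nonloop[OF W2 e t(2)]
      by (simp add: contr_graph_simps mu_graph_simps relabel_simps)
    finally show ?thesis .
  next
    case outside
    then have "\<not> h < nh G1 + nh G2 - 2" "\<not> h < nh G1 + (nh G2 - 2)"
      using ab(1,3) by arith+
    then show ?thesis
      by (simp add: contr_graph_simps mu_graph_simps relabel_simps)
  qed
qed

lemma st_contr_graph_mu_graph_right_merged:
  "st (contr_graph Q (mu_graph Q G1 G2) (nh G1 + a) (nh G1 + b)) 0
   = tr Q (\<lambda>h. h + nh G1) (st (contr_graph Q G2 a b) 0)"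
proof -
  note ab = nonloop_edge_facts[OF W2 e]
  let ?x = "st G2 (vx G2 a)" and ?y = "st G2 (vx G2 b)"
  have mate: "mate Q a ?x b ?y \<in> Qs Q ((hes G2 (vx G2 a) - {a}) \<union> (hes G2 (vx G2 b) - {b}))"
    by (rule mate_in_Qs[OF finite_hes finite_hes _ _ _ wf_st[OF W2 ab(7)] wf_st[OF W2 ab(8)]])
      (use ab in \<open>auto simp: hes_def\<close>)
  have "tr Q (\<lambda>h. h + nh G1) (mate Q a ?x b ?y)
      = mate Q (a + nh G1) (tr Q (\<lambda>h. h + nh G1) ?x) (b + nh G1) (tr Q (\<lambda>h. h + nh G1) ?y)"
    by (rule tr_mate[OF finite_hes finite_hes _ _ _ wf_st[OF W2 ab(7)] wf_st[OF W2 ab(8)]])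
      (use ab in \<open>auto simp: hes_def inj_on_def\<close>)
  then have "st (contr_graph Q (mu_graph Q G1 G2) (nh G1 + a) (nh G1 + b)) 0
      = tr Q (rank2 (nh G1 + a) (nh G1 + b)) (tr Q (\<lambda>h. h + nh G1) (mate Q a ?x b ?y))"
    using ab(2,3,7,8) by (simp add: contr_graph_simps mu_graph_simps add.commute)
  also have "\<dots> = tr Q (\<lambda>h. h + nh G1) (tr Q (rank2 a b) (mate Q a ?x b ?y))"
    by (rule tr_rank2_shift[OF ab(4) _ _ mate]) (use ab in \<open>auto simp: finite_hes hes_def\<close>)
  finally show ?thesis
    by (simp add: contr_graph_simps)
qed

lemma st_contr_graph_mu_graph_right_other:
  assumes t: "t < nv G2 - 2"
  shows "st (contr_graph Q (mu_graph Q G1 G2) (nh G1 + a) (nh G1 + b)) (nv G1 + Suc t)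
    = tr Q (\<lambda>h. h + nh G1) (st (contr_graph Q G2 a b) (Suc t))"
proof -
  note ab = nonloop_edge_facts[OF W2 e]
  let ?u = "skip2 (vx G2 a) (vx G2 b) t"
  have u: "?u < nv G2" "?u \<noteq> vx G2 a" "?u \<noteq> vx G2 b"
    using skip2_less[OF ab(9) t ab(7,8)] skip2_neq_left[OF ab(9)] skip2_neq_right[OF ab(9)] by auto
  then have u_hes: "hes G2 ?u \<inter> {a, b} = {}"
    by (auto simp: hes_def)
  have "nv G1 + Suc t < nv G1 + nv G2 - 1" "Suc t < nv G2 - 1"
    using t by arith+
  then have "st (contr_graph Q (mu_graph Q G1 G2) (nh G1 + a) (nh G1 + b)) (nv G1 + Suc t)
      = tr Q (rank2 (nh G1 + a) (nh G1 + b)) (tr Q (\<lambda>h. h + nh G1) (st G2 ?u))"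
    using u ab(2,3) skip2_shift[OF ab(9)] by (simp add: contr_graph_simps mu_graph_simps)
  also have "\<dots> = tr Q (\<lambda>h. h + nh G1) (tr Q (rank2 a b) (st G2 ?u))"
    by (rule tr_rank2_shift[OF ab(4) finite_hes u_hes wf_st[OF W2 u(1)]])
  finally show ?thesis
    using \<open>Suc t < nv G2 - 1\<close> by (simp add: contr_graph_simps)
qed

lemma st_contr_graph_mu_graph_right:
  "st (contr_graph Q (mu_graph Q G1 G2) (nh G1 + a) (nh G1 + b)) w
   = st (relabel Q (move_to_front (nv G1)) id (mu_graph Q G1 (contr_graph Q G2 a b))) w"
proof -
  note ab = nonloop_edge_facts[OF W2 e]
  let ?K2 = "contr_graph Q G2 a b"
  have nv2: "2 \<le> nv G2"
    using ab(7-9) by arith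
  have nv_K: "nv (mu_graph Q G1 ?K2) = nv G1 + (nv G2 - 1)"
    by (simp add: mu_graph_simps contr_graph_simps)
  have "move_to_front (nv G1) permutes {..<nv (mu_graph Q G1 ?K2)}"
    using move_to_front_permutes_sign[of "nv G1"] nv2
    unfolding nv_K by (auto intro: permutes_subset)
  note relabel_st = st_relabel_id[OF wf_mu_graph[OF W1 wf_contr_graph[OF W2 e]] this, unfolded nv_K]
  consider (merged) "w = 0" | (left) "0 < w" "w \<le> nv G1"
    | (right) "nv G1 < w" "w < nv G1 + nv G2 - 1" | (outside) "nv G1 + nv G2 - 1 \<le> w"
    by linarith
  then show ?thesis
  proof cases
    case merged
    have "w < nv G1 + (nv G2 - 1)" "nv G1 < nv G1 + nv ?K2"
      using merged nv2 by (auto simp: contr_graph_simps)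
    then have "st (relabel Q (move_to_front (nv G1)) id (mu_graph Q G1 ?K2)) w
        = tr Q (\<lambda>h. h + nh G1) (st ?K2 0)"
      using merged relabel_st by (simp add: inv_move_to_front mu_graph_simps)
    then show ?thesis
      using merged st_contr_graph_mu_graph_right_merged by simp
  next
    case left
    have v: "w - 1 < nv G1" "w < nv G1 + nv G2 - 1" "w < nv G1 + (nv G2 - 1)"
      using left nv2 by arith+
    have "st (contr_graph Q (mu_graph Q G1 G2) (nh G1 + a) (nh G1 + b)) w
        = tr Q (rank2 (nh G1 + a) (nh G1 + b)) (st G1 (w - 1))"
      using left v ab(2,3,7,8) skip2_shift_below[OF ab(9) v(1)]
      by (simp add: contr_graph_simps mu_graph_simps)
    also have "\<dots> = st G1 (w - 1)"
      by (rule tr_eq_self[OF wf_st[OF W1 v(1)]])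
        (auto simp: hes_def intro!: rank2_shift_below[OF ab(4)] wf_vx_less[OF W1])
    also have "\<dots> = st (relabel Q (move_to_front (nv G1)) id (mu_graph Q G1 ?K2)) w"
      using left v relabel_st by (simp add: inv_move_to_front mu_graph_simps)
    finally show ?thesis .
  next
    case right
    define t where "t = w - 1 - nv G1"
    have t: "w = nv G1 + Suc t" "t < nv G2 - 2" "w - nv G1 = Suc t"
      using right unfolding t_def by arith+
    have "w < nv G1 + (nv G2 - 1)" "\<not> w \<le> nv G1" "Suc t < nv G2 - 1"
      using right t by arith+
    then show ?thesis
      using t st_contr_graph_mu_graph_right_other[OF t(2)] relabel_st
      by (simp add: inv_move_to_front mu_graph_simps contr_graph_simps)
  next
    case outside
    then have "w \<noteq> 0" "\<not> w < nv G1 + nv G2 - 1" "\<not> w < nv G1 + (nv G2 - 1)"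
      using nv2 by arith+
    then show ?thesis
      by (simp add: contr_graph_simps mu_graph_simps relabel_simps)
  qed
qed

end

lemma contr_graph_mu_graph_right:
  assumes "wf Q G1" and W2: "wf Q G2" and e: "(a, b) \<in> nonloop_edges G2"
  shows "contr_graph Q (mu_graph Q G1 G2) (nh G1 + a) (nh G1 + b) =
         relabel Q (move_to_front (nv G1)) id (mu_graph Q G1 (contr_graph Q G2 a b))"
proof (rule qgraph_eqI)
  note ab = nonloop_edge_facts[OF W2 e]
  show "nv (contr_graph Q (mu_graph Q G1 G2) (nh G1 + a) (nh G1 + b))
      = nv (relabel Q (move_to_front (nv G1)) id (mu_graph Q G1 (contr_graph Q G2 a b)))"
    using ab(7-9) by (simp add: contr_graph_simps mu_graph_simps relabel_simps)
  show "nh (contr_graph Q (mu_graph Q G1 G2) (nh G1 + a) (nh G1 + b))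
      = nh (relabel Q (move_to_front (nv G1)) id (mu_graph Q G1 (contr_graph Q G2 a b)))"
    using ab(1,3) by (simp add: contr_graph_simps mu_graph_simps relabel_simps)
qed (use vx_contr_graph_mu_graph_right[OF assms] pr_contr_graph_mu_graph_right[OF assms]
      st_contr_graph_mu_graph_right[OF assms] in auto)

end

section \<open>The Leibniz rule\<close>

lemma nonloop_edges_mu_graph:
  assumes W1: "wf Q G1" and W2: "wf Q G2"
  shows "nonloop_edges (mu_graph Q G1 G2)
    = nonloop_edges G1 \<union> (\<lambda>e. (nh G1 + fst e, nh G1 + snd e)) ` nonloop_edges G2"
proof (rule subset_antisym)
  let ?M = "mu_graph Q G1 G2" and ?sh = "\<lambda>e. (nh G1 + fst e, nh G1 + snd e)"
  show "nonloop_edges ?M \<subseteq> nonloop_edges G1 \<union> ?sh ` nonloop_edges G2"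
  proof (rule subsetI, rule ccontr)
    fix e
    assume e: "e \<in> nonloop_edges ?M" and not_in: "e \<notin> nonloop_edges G1 \<union> ?sh ` nonloop_edges G2"
    obtain c d where cd: "e = (c, d)"
      by force
    have E: "c < d" "d < nh G1 + nh G2" "pr ?M c = d" "vx ?M c \<noteq> vx ?M d"
      using e cd by (auto simp: nonloop_edges_def mu_graph_simps)
    have "\<not> d < nh G1"
    proof
      assume "d < nh G1"
      then have "(c, d) \<in> nonloop_edges G1"
        using E by (auto simp: nonloop_edges_def mu_graph_simps)
      then show False
        using not_in cd by blast
    qed
    moreover have "\<not> c < nh G1"
      using E calculation wf_pr_less[OF W1, of c] by (auto simp: mu_graph_simps)
    ultimately have "(c - nh G1, d - nh G1) \<in> nonloop_edges G2" "e = ?sh (c - nh G1, d - nh G1)"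
      using E cd by (auto simp: nonloop_edges_def mu_graph_simps)
    then show False
      using not_in by blast
  qed
  show "nonloop_edges G1 \<union> ?sh ` nonloop_edges G2 \<subseteq> nonloop_edges ?M"
    using wf_pr_less[OF W2] by (auto simp: nonloop_edges_def mu_graph_simps)
qed

definition leibniz_defect :: "'q species \<Rightarrow> 'q qgraph \<Rightarrow> 'q qgraph \<Rightarrow> 'q chain" where
  "leibniz_defect Q G1 G2 = dE_graph Q (mu_graph Q G1 G2) - lin (\<lambda>G. single (mu_graph Q G G2)) (dE_graph Q G1)
      - smult ((-1) ^ nv G1) (lin (\<lambda>G'. single (mu_graph Q G1 G')) (dE_graph Q G2))"

lemma relsp_relabel_move_to_front:
  assumes "wf Q K" "n < nv K"
  shows "single (relabel Q (move_to_front n) id K) - smult ((-1) ^ n) (single K) \<in> relsp Q"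
proof -
  have "move_to_front n permutes {..<nv K}"
    using move_to_front_permutes_sign[of n] assms(2) by (auto intro: permutes_subset)
  from relsp_relabel_single[OF assms(1) this permutes_id] show ?thesis
    using move_to_front_permutes_sign[of n] by simp
qed

context mated
begin

lemma dE_graph_mu_graph:
  assumes W1: "wf Q G1" and W2: "wf Q G2"
  shows "dE_graph Q (mu_graph Q G1 G2) = lin (\<lambda>G. single (mu_graph Q G G2)) (dE_graph Q G1)
    + (\<Sum>e\<in>nonloop_edges G2. smult (fsign (vx G2 (fst e)) (vx G2 (snd e)) * fsign (fst e) (snd e))
        (single (relabel Q (move_to_front (nv G1)) id (mu_graph Q G1 (contr_graph Q G2 (fst e) (snd e))))))"
proof -
  let ?M = "mu_graph Q G1 G2"
  let ?sh = "\<lambda>e. (nh G1 + fst e, nh G1 + snd e)"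
  have "nonloop_edges G1 \<inter> ?sh ` nonloop_edges G2 = {}"
    by (auto simp: nonloop_edges_def)
  then have "dE_graph Q ?M = (\<Sum>e\<in>nonloop_edges G1. contr Q ?M (fst e) (snd e))
      + (\<Sum>e\<in>?sh ` nonloop_edges G2. contr Q ?M (fst e) (snd e))"
    unfolding dE_graph_eq_sum nonloop_edges_mu_graph[OF W1 W2]
    by (rule sum.union_disjoint[OF finite_nonloop_edges finite_imageI[OF finite_nonloop_edges]])
  also have "(\<Sum>e\<in>nonloop_edges G1. contr Q ?M (fst e) (snd e))
      = lin (\<lambda>G. single (mu_graph Q G G2)) (dE_graph Q G1)"
    unfolding dE_graph_eq_sum contr_def lin_sum_smult_single
  proof (rule sum.cong[OF refl])
    fix e
    assume e: "e \<in> nonloop_edges G1"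
    then have "vx ?M (fst e) = vx G1 (fst e)" "vx ?M (snd e) = vx G1 (snd e)"
      by (auto simp: nonloop_edges_def mu_graph_simps)
    then show "smult (fsign (vx ?M (fst e)) (vx ?M (snd e)) * fsign (fst e) (snd e))
        (single (contr_graph Q ?M (fst e) (snd e)))
      = smult (fsign (vx G1 (fst e)) (vx G1 (snd e)) * fsign (fst e) (snd e))
        (single (mu_graph Q (contr_graph Q G1 (fst e) (snd e)) G2))"
      using contr_graph_mu_graph_left[OF W1 W2, of "fst e" "snd e"] e by simp
  qed
  also have "(\<Sum>e\<in>?sh ` nonloop_edges G2. contr Q ?M (fst e) (snd e))
      = (\<Sum>e\<in>nonloop_edges G2. contr Q ?M (nh G1 + fst e) (nh G1 + snd e))"
    by (subst sum.reindex) (auto simp: inj_on_def)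
  also have "\<dots> = (\<Sum>e\<in>nonloop_edges G2. smult (fsign (vx G2 (fst e)) (vx G2 (snd e)) * fsign (fst e) (snd e))
        (single (relabel Q (move_to_front (nv G1)) id (mu_graph Q G1 (contr_graph Q G2 (fst e) (snd e))))))"
  proof (rule sum.cong[OF refl])
    fix e
    assume e: "e \<in> nonloop_edges G2"
    then have "fst e < nh G2" "snd e < nh G2"
      by (auto simp: nonloop_edges_def)
    then show "contr Q ?M (nh G1 + fst e) (nh G1 + snd e)
      = smult (fsign (vx G2 (fst e)) (vx G2 (snd e)) * fsign (fst e) (snd e))
        (single (relabel Q (move_to_front (nv G1)) id (mu_graph Q G1 (contr_graph Q G2 (fst e) (snd e)))))"
      unfolding contr_def using contr_graph_mu_graph_right[OF W1 W2, of "fst e" "snd e"] e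
      by (simp add: mu_graph_simps fsign_shift)
  qed
  finally show ?thesis .
qed

lemma leibniz_defect_relsp:
  assumes W1: "wf Q G1" and W2: "wf Q G2"
  shows "leibniz_defect Q G1 G2 \<in> relsp Q"
proof -
  let ?K = "\<lambda>e. mu_graph Q G1 (contr_graph Q G2 (fst e) (snd e))"
  let ?sg = "\<lambda>e. fsign (vx G2 (fst e)) (vx G2 (snd e)) * fsign (fst e) (snd e)"
  let ?defect = "\<lambda>e. single (relabel Q (move_to_front (nv G1)) id (?K e)) - smult ((-1) ^ nv G1) (single (?K e))"
  have "leibniz_defect Q G1 G2 = (\<Sum>e\<in>nonloop_edges G2. smult (?sg e) (?defect e))"
    unfolding leibniz_defect_def dE_graph_mu_graph[OF W1 W2] dE_graph_eq_sum[of Q G2] contr_def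
      lin_sum_smult_single
    by (simp add: sum_subtractf smult_sum_right smult_diff_right mult.commute)
  also have "\<dots> \<in> relsp Q"
  proof (rule relsp_sum, rule relsp.scale)
    fix e
    assume e: "e \<in> nonloop_edges G2"
    then have "(fst e, snd e) \<in> nonloop_edges G2"
      by simp
    note ab = nonloop_edge_facts[OF W2 this]
    show "?defect e \<in> relsp Q"
      by (rule relsp_relabel_move_to_front[OF wf_mu_graph[OF W1 wf_contr_graph[OF W2]]])
        (use e ab(7-9) in \<open>auto simp: mu_graph_simps contr_graph_simps\<close>)
  qed
  finally show ?thesis .
qed

end

definition mu_sgn :: "'q species \<Rightarrow> 'q chain \<Rightarrow> 'q chain \<Rightarrow> 'q chain" where
  "mu_sgn Q x y = lin (\<lambda>G1. lin (\<lambda>G2. smult ((-1) ^ nv G1) (single (mu_graph Q G1 G2))) y) x"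

lemma mu_eq_lin_lin: "mu Q x y = lin (\<lambda>G1. lin (\<lambda>G2. single (mu_graph Q G1 G2)) y) x"
  unfolding mu_def by (rule lin2_eq_lin_lin)

lemma mu_diff_left: "finsupp a \<Longrightarrow> finsupp b \<Longrightarrow> mu Q (a - b) y = mu Q a y - mu Q b y"
  unfolding mu_eq_lin_lin by (rule lin_diff)

lemma mu_sgn_diff_right: "finsupp a \<Longrightarrow> finsupp b \<Longrightarrow> mu_sgn Q x (a - b) = mu_sgn Q x a - mu_sgn Q x b"
  unfolding mu_sgn_def by (simp add: lin_diff lin_fun_diff[symmetric])

lemma dE_diff: "finsupp a \<Longrightarrow> finsupp b \<Longrightarrow> dE Q (a - b) = dE Q a - dE Q b"
  unfolding dE_def by (rule lin_diff)

lemma lin_mu: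
  "finsupp x \<Longrightarrow> finsupp y \<Longrightarrow> (\<And>G. finsupp (d G)) \<Longrightarrow>
   lin d (mu Q x y) = lin (\<lambda>G1. lin (\<lambda>G2. d (mu_graph Q G1 G2)) y) x"
  unfolding mu_eq_lin_lin by (simp add: lin_lin finsupp_lin)

lemma mu_lin_left:
  "finsupp x \<Longrightarrow> (\<And>G. finsupp (d G)) \<Longrightarrow>
   mu Q (lin d x) y = lin (\<lambda>G1. lin (\<lambda>G2. lin (\<lambda>G. single (mu_graph Q G G2)) (d G1)) y) x"
  unfolding mu_eq_lin_lin by (simp add: lin_lin lin_lin_swap[of _ y])

lemma mu_sgn_lin_right:
  "finsupp y \<Longrightarrow> (\<And>G. finsupp (d G)) \<Longrightarrow>
   mu_sgn Q x (lin d y)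
   = lin (\<lambda>G1. lin (\<lambda>G2. smult ((-1) ^ nv G1) (lin (\<lambda>G'. single (mu_graph Q G1 G')) (d G2))) y) x"
  unfolding mu_sgn_def by (simp add: lin_lin lin_fun_smult)

lemma bracket_eq:
  assumes "finsupp x" "finsupp y"
  shows "bracket Q x y = dH Q (mu Q x y) - mu Q (dH Q x) y - mu_sgn Q x (dH Q y)"
  unfolding bracket_def lin2_eq_lin_lin bracket_graph_def dH_def lin_mu[OF assms finsupp_dH_graph]
    mu_lin_left[OF assms(1) finsupp_dH_graph] mu_sgn_lin_right[OF assms(2) finsupp_dH_graph]
  by (simp add: mu_eq_lin_lin lin_fun_diff)

lemma leibniz_defect_lin:
  assumes "finsupp u" "finsupp v"
  shows "dE Q (mu Q u v) - mu Q (dE Q u) v - mu_sgn Q u (dE Q v) = lin (\<lambda>G1. lin (leibniz_defect Q G1) v) u"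
  unfolding dE_def lin_mu[OF assms finsupp_dE_graph] mu_lin_left[OF assms(1) finsupp_dE_graph]
    mu_sgn_lin_right[OF assms(2) finsupp_dE_graph] leibniz_defect_def
  by (simp only: lin_fun_diff)

context mated
begin

lemma mu_gchains: "x \<in> gchains Q \<Longrightarrow> y \<in> gchains Q \<Longrightarrow> mu Q x y \<in> gchains Q"
  unfolding mu_eq_lin_lin
  by (intro gchains_lin gchains_single wf_mu_graph finsupp_lin gchains_finsupp) (auto intro: gchains_wf)

lemma dE_mu_leibniz_relsp:
  assumes u: "u \<in> gchains Q" and v: "v \<in> gchains Q"
  shows "dE Q (mu Q u v) - mu Q (dE Q u) v - mu_sgn Q u (dE Q v) \<in> relsp Q"
  unfolding leibniz_defect_lin[OF gchains_finsupp[OF u] gchains_finsupp[OF v]]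
  by (intro relsp_lin[OF gchains_finsupp[OF u]] relsp_lin[OF gchains_finsupp[OF v]] leibniz_defect_relsp)
    (auto intro: gchains_wf[OF u] gchains_wf[OF v])

lemma mu_relsp_left:
  assumes r: "r \<in> relsp Q" and v: "v \<in> gchains Q"
  shows "mu Q r v \<in> relsp Q"
  unfolding mu_eq_lin_lin
proof (rule lin_relsp_invariant[OF r])
  fix G \<sigma> \<tau>
  assume W: "wf Q G" and s: "\<sigma> permutes {..<nv G}" and t: "\<tau> permutes {..<nh G}"
  have "single (mu_graph Q G G2) - smult (of_int (sign \<sigma> * sign \<tau>)) (single (mu_graph Q (relabel Q \<sigma> \<tau> G) G2))
      \<in> relsp Q" if "v G2 \<noteq> 0" for G2
    unfolding mu_graph_relabel_left[OF W gchains_wf[OF v that] s t]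
    by (rule relsp.gen[OF wf_mu_graph[OF W gchains_wf[OF v that]]])
      (use s t in \<open>auto simp: mu_graph_simps intro: permutes_subset\<close>)
  then show "lin (\<lambda>G2. single (mu_graph Q G G2)) v
      - smult (of_int (sign \<sigma> * sign \<tau>)) (lin (\<lambda>G2. single (mu_graph Q (relabel Q \<sigma> \<tau> G) G2)) v) \<in> relsp Q"
    unfolding lin_fun_smult[symmetric] lin_fun_diff[symmetric]
    by (rule relsp_lin[OF gchains_finsupp[OF v]])
qed

lemma mu_sgn_relsp_right:
  assumes u: "u \<in> gchains Q" and r: "r \<in> relsp Q"
  shows "mu_sgn Q u r \<in> relsp Q"
  unfolding mu_sgn_def
proof (rule relsp_lin[OF gchains_finsupp[OF u]])
  fix G1
  assume "u G1 \<noteq> 0"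
  then have W1: "wf Q G1"
    using gchains_wf[OF u] by blast
  show "lin (\<lambda>G2. smult ((-1) ^ nv G1) (single (mu_graph Q G1 G2))) r \<in> relsp Q"
  proof (rule lin_relsp_invariant[OF r])
    fix G \<sigma> \<tau>
    assume W: "wf Q G" and s: "\<sigma> permutes {..<nv G}" and t: "\<tau> permutes {..<nh G}"
    let ?\<sigma> = "shift_perm (nv G1) \<sigma>" and ?\<tau> = "shift_perm (nh G1) \<tau>"
    have shifted: "?\<sigma> permutes {..<nv (mu_graph Q G1 G)}" "?\<tau> permutes {..<nh (mu_graph Q G1 G)}"
      "sign ?\<sigma> = sign \<sigma>" "sign ?\<tau> = sign \<tau>"
      using shift_perm_permutes_sign[OF s, of "nv G1"] shift_perm_permutes_sign[OF t, of "nh G1"]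
      by (simp_all add: mu_graph_simps)
    from relsp.scale[OF relsp.gen[OF wf_mu_graph[OF W1 W] shifted(1,2)], of "(-1) ^ nv G1"]
    show "smult ((-1) ^ nv G1) (single (mu_graph Q G1 G)) - smult (of_int (sign \<sigma> * sign \<tau>))
       (smult ((-1) ^ nv G1) (single (mu_graph Q G1 (relabel Q \<sigma> \<tau> G)))) \<in> relsp Q"
      unfolding mu_graph_relabel_right[OF W1 W s t] shifted(3,4)
      by (simp add: smult_diff_right mult.commute)
  qed
qed

lemma mu_dE_left_relsp:
  assumes a: "a \<in> gchains Q" and y: "y \<in> gchains Q" and "dE Q y \<in> relsp Q"
  shows "mu Q (dE Q a) y - dE Q (mu Q a y) \<in> relsp Q"
proof -
  have "mu Q (dE Q a) y - dE Q (mu Q a y)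
      = - (dE Q (mu Q a y) - mu Q (dE Q a) y - mu_sgn Q a (dE Q y)) - mu_sgn Q a (dE Q y)"
    by (simp add: algebra_simps)
  also have "\<dots> \<in> relsp Q"
    by (intro relsp_diff relsp_uminus dE_mu_leibniz_relsp mu_sgn_relsp_right a y assms(3))
  finally show ?thesis .
qed

lemma mu_sgn_dE_right_relsp:
  assumes x: "x \<in> gchains Q" and b: "b \<in> gchains Q" and "dE Q x \<in> relsp Q"
  shows "mu_sgn Q x (dE Q b) - dE Q (mu Q x b) \<in> relsp Q"
proof -
  have "mu_sgn Q x (dE Q b) - dE Q (mu Q x b)
      = - (dE Q (mu Q x b) - mu Q (dE Q x) b - mu_sgn Q x (dE Q b)) - mu Q (dE Q x) b"
    by (simp add: algebra_simps)
  also have "\<dots> \<in> relsp Q"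
    by (intro relsp_diff relsp_uminus dE_mu_leibniz_relsp mu_relsp_left x b assms(3))
  finally show ?thesis .
qed

lemma dE_mu_cycles_relsp:
  assumes x: "x \<in> gchains Q" and y: "y \<in> gchains Q" and "dE Q x \<in> relsp Q" "dE Q y \<in> relsp Q"
  shows "dE Q (mu Q x y) \<in> relsp Q"
proof -
  have "dE Q (mu Q x y) = (dE Q (mu Q x y) - mu Q (dE Q x) y - mu_sgn Q x (dE Q y))
      + mu Q (dE Q x) y + mu_sgn Q x (dE Q y)"
    by simp
  also have "\<dots> \<in> relsp Q"
    by (intro relsp.add dE_mu_leibniz_relsp mu_relsp_left mu_sgn_relsp_right x y assms(3,4))
  finally show ?thesis .
qed

lemma bracket_cycles_is_boundary:
  assumes x: "x \<in> gchains Q" and y: "y \<in> gchains Q" and cx: "dE Q x \<in> relsp Q" and cy: "dE Q y \<in> relsp Q"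
  shows "\<exists>z\<in>gchains Q. bracket Q x y - dE Q z \<in> relsp Q"
proof
  have Sx: "htpy x \<in> gchains Q" and Sy: "htpy y \<in> gchains Q" and m: "mu Q x y \<in> gchains Q"
    using htpy_gchains mu_gchains x y by blast+
  note supp = gchains_finsupp finsupp_dE finsupp_htpy
  show "htpy (mu Q x y) - mu Q (htpy x) y - mu Q x (htpy y) \<in> gchains Q"
    by (intro gchains_diff htpy_gchains mu_gchains Sx Sy m x y)
  have "dE Q (htpy (mu Q x y) - mu Q (htpy x) y - mu Q x (htpy y))
      = dE Q (htpy (mu Q x y)) - dE Q (mu Q (htpy x) y) - dE Q (mu Q x (htpy y))"
  proof -
    have "finsupp (htpy (mu Q x y))" "finsupp (mu Q (htpy x) y)" "finsupp (mu Q x (htpy y))"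
      using gchains_finsupp htpy_gchains mu_gchains Sx Sy m x y by blast+
    then show ?thesis
      by (simp add: dE_diff)
  qed
  moreover have "bracket Q x y
      = dE Q (htpy (mu Q x y)) - htpy (dE Q (mu Q x y))
        - (mu Q (dE Q (htpy x)) y - mu Q (htpy (dE Q x)) y)
        - (mu_sgn Q x (dE Q (htpy y)) - mu_sgn Q x (htpy (dE Q y)))"
    unfolding bracket_eq[OF gchains_finsupp[OF x] gchains_finsupp[OF y]]
      dH_eq_dE_htpy_minus_htpy_dE[OF x] dH_eq_dE_htpy_minus_htpy_dE[OF y] dH_eq_dE_htpy_minus_htpy_dE[OF m]
    using x y Sx Sy by (simp add: mu_diff_left mu_sgn_diff_right supp)
  ultimately have "bracket Q x y - dE Q (htpy (mu Q x y) - mu Q (htpy x) y - mu Q x (htpy y))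
      = - htpy (dE Q (mu Q x y)) + mu Q (htpy (dE Q x)) y + mu_sgn Q x (htpy (dE Q y))
        - (mu Q (dE Q (htpy x)) y - dE Q (mu Q (htpy x) y))
        - (mu_sgn Q x (dE Q (htpy y)) - dE Q (mu Q x (htpy y)))"
    by (simp add: algebra_simps)
  also have "\<dots> \<in> relsp Q"
    by (intro relsp.add relsp_diff relsp_uminus htpy_relsp mu_relsp_left mu_sgn_relsp_right
        dE_mu_cycles_relsp mu_dE_left_relsp mu_sgn_dE_right_relsp x y cx cy Sx Sy)
  finally show "bracket Q x y - dE Q (htpy (mu Q x y) - mu Q (htpy x) y - mu Q x (htpy y)) \<in> relsp Q" .
qed

end

theorem propositionB1:
  fixes Q :: "'q species"
  assumes "mated_species Q"
  shows "(\<forall>x\<in>gchains Q. dE Q x \<in> relsp Q \<longrightarrow>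
            (\<exists>y\<in>gchains Q. dH Q x - dE Q y \<in> relsp Q))
       \<and> (\<forall>x\<in>gchains Q. \<forall>y\<in>gchains Q. dE Q x \<in> relsp Q \<longrightarrow> dE Q y \<in> relsp Q \<longrightarrow>
            (\<exists>z\<in>gchains Q. bracket Q x y - dE Q z \<in> relsp Q))"
proof -
  interpret mated Q
    using assms by unfold_locales
  show ?thesis
    using dH_cycle_is_boundary bracket_cycles_is_boundary by blast
qed

end
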